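(* Let $A$ be an arborescence of $G$. Then $A$ is popular if and only if there exist $y=(y_S)_{S\subseteq E}$ with $y_S\ge 0$ for all $S$ and $\alpha=(\alpha_v)_{v\in V}\in\mathbb R^V$ such that $\sum_{S\subseteq E:\,e\in S}y_S+\alpha_v\ge \mathrm{wt}_A(e)$ for every $v\in V$ and every $e\in\delta(v)$, $\sum_{S\subseteq E}\mathrm{rank}(S)\,y_S+\sum_{v\in V}\alpha_v=0$, and the following hold: (1) $y$ is integral and its support $\mathcal C=\{S\subseteq E: y_S>0\}$ is a chain; (2) every $C\in\mathcal C$ satisfies $\mathrm{span}(A\cap C)=C$; (3) every element of $\mathcal C$ is nonempty, and the maximal element of $\mathcal C$ is $E$; (4) $y_C=1$ for each $C\in\mathcal C$, and $\alpha_v=-|\{C\in\mathcal C: A(v)\in C\}|$ for each $v\in V$.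
   Context: $G=(V\cup\{r\},E)$ is a directed graph, $r$ has no incoming edge, each $v\in V$ has a partial order $\succ_v$ on its set $\delta(v)$ of incoming edges; write $e\sim_v f$ if neither $e\succ_v f$ nor $f\succ_v e$. An arborescence is $A\subseteq E$ with no cycle in the underlying undirected graph and exactly one edge $A(v)\in\delta(v)$ for each $v\in V$; $A$ is popular if $\phi(A,A')\ge\phi(A',A)$ for all arborescences $A'$, where $\phi(A,A')$ counts $v$ with $A(v)\succ_v A'(v)$. For $e\in\delta(v)$, $\mathrm{wt}_A(e)=1$ if $e\succ_v A(v)$, $0$ if $e\sim_v A(v)$, and $-1$ if $A(v)\succ_v e$. $\mathrm{rank}(S)$ is the maximum size of a subset of $S$ that is acyclic in the underlying undirected graph (graphic matroid rank), and $\mathrm{span}(S)=\{e\in E:\mathrm{rank}(S\cup\{e\})=\mathrm{rank}(S)\}$. A chain is a family of distinct subsets of $E$ any two of which are comparable by strict inclusion. *)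

theory Defs
  imports Complex_Main
begin

text \<open>A directed multigraph on vertex set V \<union> {r} with edge set E; each edge e has a
  tail and a head.  Edges are abstract, so parallel edges are allowed.\<close>

definition ucycle :: "('e \<Rightarrow> 'v) \<Rightarrow> ('e \<Rightarrow> 'v) \<Rightarrow> 'e list \<Rightarrow> 'v list \<Rightarrow> bool" where
  "ucycle tail head es vs \<longleftrightarrow>
     es \<noteq> [] \<and> length vs = length es + 1 \<and> distinct es \<and>
     vs ! 0 = vs ! length es \<and> distinct (take (length es) vs) \<and>
     (\<forall>i < length es. {tail (es ! i), head (es ! i)} = {vs ! i, vs ! (i + 1)})"

definition uacyclic :: "('e \<Rightarrow> 'v) \<Rightarrow> ('e \<Rightarrow> 'v) \<Rightarrow> 'e set \<Rightarrow> bool" where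
  "uacyclic tail head S \<longleftrightarrow> \<not> (\<exists>es vs. set es \<subseteq> S \<and> ucycle tail head es vs)"

definition grank :: "('e \<Rightarrow> 'v) \<Rightarrow> ('e \<Rightarrow> 'v) \<Rightarrow> 'e set \<Rightarrow> nat" where
  "grank tail head S = Max {card F | F. F \<subseteq> S \<and> uacyclic tail head F}"

definition gspan :: "('e \<Rightarrow> 'v) \<Rightarrow> ('e \<Rightarrow> 'v) \<Rightarrow> 'e set \<Rightarrow> 'e set \<Rightarrow> 'e set" where
  "gspan tail head E S = {e \<in> E. grank tail head (S \<union> {e}) = grank tail head S}"

definition arborescence :: "'v set \<Rightarrow> 'e set \<Rightarrow> ('e \<Rightarrow> 'v) \<Rightarrow> ('e \<Rightarrow> 'v) \<Rightarrow> 'e set \<Rightarrow> bool" where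
  "arborescence V E tail head A \<longleftrightarrow>
     A \<subseteq> E \<and> uacyclic tail head A \<and> (\<forall>v \<in> V. \<exists>!e. e \<in> A \<and> head e = v)"

definition aedge :: "('e \<Rightarrow> 'v) \<Rightarrow> 'e set \<Rightarrow> 'v \<Rightarrow> 'e" where
  "aedge head A v = (THE e. e \<in> A \<and> head e = v)"

text \<open>pref v e f means e \<succ>_v f.\<close>
definition phi :: "'v set \<Rightarrow> ('e \<Rightarrow> 'v) \<Rightarrow> ('v \<Rightarrow> 'e \<Rightarrow> 'e \<Rightarrow> bool) \<Rightarrow> 'e set \<Rightarrow> 'e set \<Rightarrow> nat" where
  "phi V head pref A A' = card {v \<in> V. pref v (aedge head A v) (aedge head A' v)}"

definition popular :: "'v set \<Rightarrow> 'e set \<Rightarrow> ('e \<Rightarrow> 'v) \<Rightarrow> ('e \<Rightarrow> 'v) \<Rightarrow> ('v \<Rightarrow> 'e \<Rightarrow> 'e \<Rightarrow> bool) \<Rightarrow> 'e set \<Rightarrow> bool" where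
  "popular V E tail head pref A \<longleftrightarrow>
     arborescence V E tail head A \<and>
     (\<forall>A'. arborescence V E tail head A' \<longrightarrow> phi V head pref A A' \<ge> phi V head pref A' A)"

definition wt :: "('e \<Rightarrow> 'v) \<Rightarrow> ('v \<Rightarrow> 'e \<Rightarrow> 'e \<Rightarrow> bool) \<Rightarrow> 'e set \<Rightarrow> 'e \<Rightarrow> int" where
  "wt head pref A e =
     (let v = head e; a = aedge head A v in
      if pref v e a then 1 else if pref v a e then -1 else 0)"

definition is_chain :: "'e set set \<Rightarrow> bool" where
  "is_chain \<C> \<longleftrightarrow> (\<forall>S \<in> \<C>. \<forall>T \<in> \<C>. S \<noteq> T \<longrightarrow> S \<subset> T \<or> T \<subset> S)"

end

theory Submission
  imports Defs "HOL-Library.Transitive_Closure_Table"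
begin

text \<open>Popularity of A says that no arborescence B has positive weight
  \<open>\<Sum>v. wt\<^sub>A(B(v))\<close>, i.e. A maximises this weight over the common bases of the graphic
  matroid and the partition matroid of in-edges; the conditions on y and \<alpha> describe a dual
  solution of value 0, so one direction is weak LP duality.
  For the converse, consider the exchange graph on V with an arc from v to u, weighted by the best
  \<open>wt\<^sub>A\<close> of an edge entering v whose fundamental cycle in A contains the tree edge of u.
  Performing the exchanges of a shortest positive cycle simultaneously would produce an
  arborescence of positive weight, so all cycles are nonpositive and there is an integer potential
  L with \<open>L(head e) + wt\<^sub>A(e) \<le> L(u)\<close> for every u on the fundamental cycle of e. The nonempty
  level sets \<open>{e. L \<ge> l on the fundamental cycle of e}\<close> form the chain; each is spanned by
  its tree edges, which gives the span and rank conditions.\<close>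

section \<open>Connectivity and acyclicity in the underlying undirected graph\<close>

definition uadj :: "('e \<Rightarrow> 'v) \<Rightarrow> ('e \<Rightarrow> 'v) \<Rightarrow> 'e set \<Rightarrow> 'v \<Rightarrow> 'v \<Rightarrow> bool" where
  "uadj tail head F x y \<longleftrightarrow> (\<exists>f\<in>F. {tail f, head f} = {x, y})"

abbreviation uconn :: "('e \<Rightarrow> 'v) \<Rightarrow> ('e \<Rightarrow> 'v) \<Rightarrow> 'e set \<Rightarrow> 'v \<Rightarrow> 'v \<Rightarrow> bool" where
  "uconn tail head F \<equiv> (uadj tail head F)\<^sup>*\<^sup>*"

lemma uconn_sym: "uconn tail head F x y \<Longrightarrow> uconn tail head F y x"
proof (induction rule: rtranclp_induct)
  case (step y z)
  have "uadj tail head F z y" using step(2) unfolding uadj_def by (auto simp: insert_commute)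
  then show ?case using step(3) by (meson converse_rtranclp_into_rtranclp)
qed simp

lemma uconn_edge: "f \<in> F \<Longrightarrow> {tail f, head f} = {x, y} \<Longrightarrow> uconn tail head F x y"
  unfolding uadj_def by (intro r_into_rtranclp) auto

lemma uconn_ends: "f \<in> F \<Longrightarrow> uconn tail head F (tail f) (head f)"
  by (rule uconn_edge) auto

lemma uconn_via_edges:
  assumes "uconn tail head G a b" and "\<forall>g\<in>G. uconn tail head H (tail g) (head g)"
  shows "uconn tail head H a b"
  using assms(1)
proof (induction rule: rtranclp_induct)
  case (step y z)
  from step(2) obtain g where g: "g \<in> G" "{tail g, head g} = {y, z}" unfolding uadj_def by auto
  then have "uconn tail head H y z"
    using assms(2) uconn_sym by (metis doubleton_eq_iff)
  then show ?case using step(3) by (rule rtranclp_trans[rotated])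
qed simp

lemma uconn_mono: "uconn tail head F x y \<Longrightarrow> F \<subseteq> G \<Longrightarrow> uconn tail head G x y"
  by (erule uconn_via_edges) (auto intro: uconn_ends)

lemma uacyclic_subset: "uacyclic tail head S \<Longrightarrow> T \<subseteq> S \<Longrightarrow> uacyclic tail head T"
  unfolding uacyclic_def by blast

lemma uacyclic_empty: "uacyclic tail head {}"
  unfolding uacyclic_def ucycle_def by auto

lemma uconn_simple_path:
  assumes "uconn tail head F x y"
  obtains ps fs where "length ps = Suc (length fs)" "ps ! 0 = x" "ps ! length fs = y"
    "distinct ps" "distinct fs" "set fs \<subseteq> F"
    "\<And>i. i < length fs \<Longrightarrow> {tail (fs ! i), head (fs ! i)} = {ps ! i, ps ! Suc i}"
proof -
  from assms obtain xs0 where "rtrancl_path (uadj tail head F) x xs0 y"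
    by (auto simp: rtranclp_eq_rtrancl_path)
  then obtain xs where p: "rtrancl_path (uadj tail head F) x xs y" and d: "distinct (x # xs)"
    using rtrancl_path_distinct by metis
  define ps where "ps = x # xs"
  define n where "n = length xs"
  have lenps: "length ps = Suc n" and dps: "distinct ps" unfolding ps_def n_def using d by simp_all
  have "\<exists>f. f \<in> F \<and> {tail f, head f} = {ps ! i, ps ! Suc i}" if "i < n" for i
    using rtrancl_path_nth[OF p, of i] that unfolding ps_def n_def uadj_def by auto
  then obtain fe where fe: "\<And>i. i < n \<Longrightarrow> fe i \<in> F \<and> {tail (fe i), head (fe i)} = {ps ! i, ps ! Suc i}"
    by metis
  have last: "ps ! n = y"
  proof (cases "xs = []")
    case True then show ?thesis using p unfolding ps_def n_def by (auto elim: rtrancl_path.cases)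
  next
    case False then show ?thesis using rtrancl_path_last[OF p False] unfolding ps_def n_def
      by (simp add: last_conv_nth)
  qed
  have "fe i \<noteq> fe j" if "i < n" "j < n" "i \<noteq> j" for i j
  proof
    assume "fe i = fe j"
    then have "{ps ! i, ps ! Suc i} = {ps ! j, ps ! Suc j}" using fe[OF that(1)] fe[OF that(2)] by simp
    then show False using that dps lenps by (auto simp: doubleton_eq_iff nth_eq_iff_index_eq)
  qed
  then have "distinct (map fe [0..<n])"
    by (auto simp: distinct_map inj_on_def intro: ccontr)
  show ?thesis
  proof (rule that)
    show "length ps = Suc (length (map fe [0..<n]))" "ps ! length (map fe [0..<n]) = y"
      using lenps last by simp_all
    show "set (map fe [0..<n]) \<subseteq> F"
      "\<And>i. i < length (map fe [0..<n]) \<Longrightarrow>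
        {tail (map fe [0..<n] ! i), head (map fe [0..<n] ! i)} = {ps ! i, ps ! Suc i}"
      using fe by auto
  qed (use dps \<open>distinct (map fe [0..<n])\<close> ps_def in simp_all)
qed

lemma uconn_imp_not_uacyclic_insert:
  assumes c: "uconn tail head F x y" and eF: "e \<notin> F" and ee: "{tail e, head e} = {x, y}"
  shows "\<not> uacyclic tail head (insert e F)"
proof -
  obtain ps fs where p: "length ps = Suc (length fs)" "ps ! 0 = x" "ps ! length fs = y"
      "distinct ps" "distinct fs" "set fs \<subseteq> F"
      and fs: "\<And>i. i < length fs \<Longrightarrow> {tail (fs ! i), head (fs ! i)} = {ps ! i, ps ! Suc i}"
    using uconn_simple_path[OF c] by blast
  define es where "es = fs @ [e]"
  define vs where "vs = ps @ [x]"
  have "ucycle tail head es vs"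
    unfolding ucycle_def
  proof (intro conjI allI impI)
    show "es \<noteq> []" "length vs = length es + 1" "distinct es"
      using p eF unfolding es_def vs_def by auto
    show "vs ! 0 = vs ! length es" "distinct (take (length es) vs)"
      using p unfolding es_def vs_def by (simp_all add: nth_append)
    fix i assume "i < length es"
    then consider "i < length fs" | "i = length fs" unfolding es_def by fastforce
    then show "{tail (es ! i), head (es ! i)} = {vs ! i, vs ! (i + 1)}"
    proof cases
      case 1
      then show ?thesis using fs p(1) unfolding es_def vs_def by (simp add: nth_append)
    next
      case 2
      then show ?thesis using ee p(1,3) unfolding es_def vs_def by (simp add: nth_append insert_commute)
    qed
  qed
  moreover have "set es \<subseteq> insert e F" unfolding es_def using p(6) by auto
  ultimately show ?thesis unfolding uacyclic_def by blast
qed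

lemma ucycle_segment_uconn:
  assumes cy: "ucycle tail head es vs" and "a \<le> b" "b \<le> length es" "\<forall>j\<in>{a..<b}. es ! j \<in> F"
  shows "uconn tail head F (vs ! a) (vs ! b)"
  using assms(2-4)
proof (induction b)
  case (Suc b)
  show ?case
  proof (cases "a = Suc b")
    case False
    then have "uconn tail head F (vs ! a) (vs ! b)" using Suc by auto
    moreover have "es ! b \<in> F" "b < length es" using Suc.prems False by auto
    then have "uconn tail head F (vs ! b) (vs ! Suc b)"
      using uconn_edge[of "es ! b" F tail head] cy unfolding ucycle_def by simp
    ultimately show ?thesis by simp
  qed simp
qed simp

lemma not_uacyclic_insert_imp_uconn:
  assumes F: "uacyclic tail head F" and c: "\<not> uacyclic tail head (insert e F)"
  shows "uconn tail head F (tail e) (head e)"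
proof -
  from c obtain es vs where ses: "set es \<subseteq> insert e F" and cy: "ucycle tail head es vs"
    unfolding uacyclic_def by blast
  have "e \<in> set es"
  proof (rule ccontr)
    assume "e \<notin> set es"
    then have "set es \<subseteq> F" using ses by auto
    then show False using F cy unfolding uacyclic_def by blast
  qed
  then obtain i where i: "i < length es" "es ! i = e" by (auto simp: in_set_conv_nth)
  have other: "\<forall>j\<in>{a..<b}. es ! j \<in> F" if "i \<notin> {a..<b}" "b \<le> length es" for a b
  proof
    fix j assume "j \<in> {a..<b}"
    then have j: "j < length es" "j \<noteq> i" using that by auto
    then have "es ! j \<noteq> e" using cy i unfolding ucycle_def by (metis nth_eq_iff_index_eq)
    then show "es ! j \<in> F" using ses nth_mem[OF j(1)] by blast
  qed
  have "uconn tail head F (vs ! (i + 1)) (vs ! length es)"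
    using ucycle_segment_uconn[OF cy _ _ other] i by simp
  moreover have "uconn tail head F (vs ! 0) (vs ! i)"
    using ucycle_segment_uconn[OF cy _ _ other] i by simp
  moreover have "vs ! 0 = vs ! length es" "{tail e, head e} = {vs ! i, vs ! (i + 1)}"
    using cy i unfolding ucycle_def by auto
  ultimately show ?thesis by (metis rtranclp_trans uconn_sym doubleton_eq_iff)
qed

lemma uacyclic_insert_iff:
  assumes "uacyclic tail head F" "e \<notin> F"
  shows "uacyclic tail head (insert e F) \<longleftrightarrow> \<not> uconn tail head F (tail e) (head e)"
  using not_uacyclic_insert_imp_uconn[OF assms(1)]
    uconn_imp_not_uacyclic_insert[OF _ assms(2), of tail head "tail e" "head e"] by blast

lemma uacyclic_exchange:
  assumes T: "uacyclic tail head T" and fT: "f \<in> T" and eT: "e \<notin> T"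
    and c: "uconn tail head (insert e (T - {f})) (tail f) (head f)"
  shows "uacyclic tail head (insert e (T - {f}))"
proof (rule ccontr)
  assume nc: "\<not> uacyclic tail head (insert e (T - {f}))"
  have T0: "uacyclic tail head (T - {f})" using T by (rule uacyclic_subset) auto
  then have "uconn tail head (T - {f}) (tail e) (head e)"
    using nc by (rule not_uacyclic_insert_imp_uconn)
  then have "\<forall>g\<in>insert e (T - {f}). uconn tail head (T - {f}) (tail g) (head g)"
    by (auto intro: uconn_ends)
  then have "uconn tail head (T - {f}) (tail f) (head f)" using uconn_via_edges[OF c] by blast
  then have "\<not> uacyclic tail head (insert f (T - {f}))" by (rule uconn_imp_not_uacyclic_insert) auto
  then show False using T fT by (simp add: insert_absorb)
qed

lemma uacyclic_exchange_spanned: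
  assumes X: "uacyclic tail head X" and x: "x \<in> X"
    and spanned: "\<forall>y\<in>X. uconn tail head F (tail y) (head y)"
  obtains f where "f \<in> F" "f \<notin> X - {x}" "uacyclic tail head (insert f (X - {x}))"
proof -
  have X0: "uacyclic tail head (X - {x})" using X by (rule uacyclic_subset) auto
  have "\<not> uconn tail head (X - {x}) (tail x) (head x)"
    using uacyclic_insert_iff[OF X0, of x] X x by (simp add: insert_absorb)
  moreover have "uconn tail head (X - {x}) (tail x) (head x)"
    if "\<forall>f\<in>F. uconn tail head (X - {x}) (tail f) (head f)"
    using uconn_via_edges[OF _ that] spanned x by blast
  ultimately obtain f where f: "f \<in> F" "\<not> uconn tail head (X - {x}) (tail f) (head f)"
    by blast
  moreover from f(2) have "f \<notin> X - {x}" using uconn_ends[of f "X - {x}" tail head] by blast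
  moreover from f(2) this have "uacyclic tail head (insert f (X - {x}))"
    by (simp add: uacyclic_insert_iff[OF X0])
  ultimately show ?thesis using that by blast
qed

lemma card_le_if_spanned:
  assumes "finite X" "uacyclic tail head X" "\<forall>x\<in>X. uconn tail head F (tail x) (head x)"
    and "finite F"
  shows "card X \<le> card F"
  using assms(1-3)
proof (induction "card (X - F)" arbitrary: X rule: less_induct)
  case less
  show ?case
  proof (cases "X \<subseteq> F")
    case True then show ?thesis using assms(4) by (simp add: card_mono)
  next
    case False
    then obtain x where x: "x \<in> X" "x \<notin> F" by auto
    obtain f where f: "f \<in> F" "f \<notin> X - {x}" and X1: "uacyclic tail head (insert f (X - {x}))"
      using uacyclic_exchange_spanned[OF less.prems(2) x(1) less.prems(3)] by blast
    have "insert f (X - {x}) - F = (X - F) - {x}" using f(1) by auto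
    then have "card (insert f (X - {x}) - F) < card (X - F)"
      using x less.prems(1) card_Diff1_less[of "X - F" x] by simp
    moreover have "\<forall>y\<in>insert f (X - {x}). uconn tail head F (tail y) (head y)"
      using less.prems(3) uconn_ends[OF f(1)] by blast
    ultimately have "card (insert f (X - {x})) \<le> card F"
      using less.hyps[of "insert f (X - {x})"] less.prems(1) X1 by simp
    moreover have "card (insert f (X - {x})) = card X"
      using f(2) x(1) less.prems(1) card_Suc_Diff1[of X x] by simp
    ultimately show ?thesis by simp
  qed
qed

section \<open>Graphic rank and span\<close>

lemma finite_grank_candidates: "finite S \<Longrightarrow> finite {card F | F. F \<subseteq> S \<and> uacyclic tail head F}"
  by (rule finite_subset[of _ "card ` Pow S"]) auto

lemma grank_ge:
  assumes "finite S" "F \<subseteq> S" "uacyclic tail head F"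
  shows "card F \<le> grank tail head S"
  unfolding grank_def using assms by (intro Max_ge finite_grank_candidates) auto

lemma grank_attained:
  assumes "finite S"
  obtains F where "F \<subseteq> S" "uacyclic tail head F" "grank tail head S = card F"
proof -
  have "{card F | F. F \<subseteq> S \<and> uacyclic tail head F} \<noteq> {}" using uacyclic_empty by blast
  then have "grank tail head S \<in> {card F | F. F \<subseteq> S \<and> uacyclic tail head F}"
    unfolding grank_def using finite_grank_candidates[OF assms] by (intro Max_in)
  then show ?thesis using that by auto
qed

lemma grank_eq_card_spanning_forest:
  assumes S: "finite S" and F: "F \<subseteq> S" "uacyclic tail head F"
    and spanned: "\<forall>e\<in>S. uconn tail head F (tail e) (head e)"
  shows "grank tail head S = card F"
proof -
  obtain X where X: "X \<subseteq> S" "uacyclic tail head X" "grank tail head S = card X"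
    using grank_attained[OF S] by blast
  have "finite X" "finite F" using X(1) F(1) S by (auto intro: finite_subset)
  moreover have "\<forall>x\<in>X. uconn tail head F (tail x) (head x)" using X(1) spanned by blast
  ultimately have "card X \<le> card F" using card_le_if_spanned X(2) by blast
  then show ?thesis using grank_ge[OF S F] X(3) by simp
qed

lemma grank_uacyclic: "finite F \<Longrightarrow> uacyclic tail head F \<Longrightarrow> grank tail head F = card F"
  by (rule grank_eq_card_spanning_forest) (auto intro: uconn_ends)

lemma gspan_uacyclic:
  assumes fin: "finite F" and F: "uacyclic tail head F"
  shows "gspan tail head E F = {e\<in>E. e \<in> F \<or> uconn tail head F (tail e) (head e)}"
proof -
  have "grank tail head (insert e F) = grank tail head F \<longleftrightarrow> uconn tail head F (tail e) (head e)"
    if e: "e \<notin> F" for e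
  proof (cases "uconn tail head F (tail e) (head e)")
    case True
    then have "grank tail head (insert e F) = card F"
      using fin F by (intro grank_eq_card_spanning_forest) (auto intro: uconn_ends)
    then show ?thesis using True grank_uacyclic[OF fin F] by simp
  next
    case False
    then have "grank tail head (insert e F) = Suc (card F)"
      using uacyclic_insert_iff[OF F e] grank_uacyclic[of "insert e F"] fin e by simp
    then show ?thesis using False grank_uacyclic[OF fin F] by simp
  qed
  then have "grank tail head (F \<union> {e}) = grank tail head F \<longleftrightarrow>
      e \<in> F \<or> uconn tail head F (tail e) (head e)" for e
    by (cases "e \<in> F") (simp_all add: insert_absorb)
  then show ?thesis unfolding gspan_def by blast
qed

section \<open>Weighted closed walks and potentials\<close>

fun walk_weight :: "('n \<Rightarrow> 'n \<Rightarrow> 'a::comm_monoid_add) \<Rightarrow> 'n list \<Rightarrow> 'a" where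
  "walk_weight w (x # y # xs) = w x y + walk_weight w (y # xs)"
| "walk_weight w _ = 0"

definition closed_walk :: "('n \<Rightarrow> 'n \<Rightarrow> bool) \<Rightarrow> 'n set \<Rightarrow> 'n list \<Rightarrow> bool" where
  "closed_walk R N xs \<longleftrightarrow> 2 \<le> length xs \<and> hd xs = last xs \<and> successively R xs \<and> set xs \<subseteq> N"

lemma successively_append_Cons:
  "successively R (xs @ a # ys) \<longleftrightarrow> successively R (xs @ [a]) \<and> successively R (a # ys)"
  by (auto simp: successively_append_iff)

lemma walk_weight_append:
  "walk_weight w (xs @ a # ys) = walk_weight w (xs @ [a]) + walk_weight w (a # ys)"
proof (induction xs)
  case Nil then show ?case by (cases ys) auto
next
  case (Cons x xs) then show ?case by (cases xs) (auto simp: add.assoc)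
qed

lemma walk_weight_snoc: "xs \<noteq> [] \<Longrightarrow> walk_weight w (xs @ [y]) = walk_weight w xs + w (last xs) y"
proof (induction xs)
  case (Cons x xs) then show ?case by (cases xs) (auto simp: add.assoc)
qed simp

lemma walk_weight_vertex: "walk_weight (\<lambda>a b. g a) xs = sum_list (map g (butlast xs))"
proof (induction xs)
  case (Cons x xs) then show ?case by (cases xs) auto
qed simp

lemma walk_weight_conv_sum: "walk_weight w xs = (\<Sum>i < length xs - 1. w (xs ! i) (xs ! Suc i))"
proof (induction w xs rule: walk_weight.induct)
  case (1 w x y xs)
  then show ?case by (simp add: sum.lessThan_Suc_shift del: sum.lessThan_Suc)
qed auto

lemma walk_weight_mono:
  fixes f g :: "'n \<Rightarrow> 'n \<Rightarrow> 'a::ordered_comm_monoid_add"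
  shows "successively R z \<Longrightarrow> (\<And>a b. a \<in> set z \<Longrightarrow> R a b \<Longrightarrow> f a b \<le> g a b) \<Longrightarrow>
    walk_weight f z \<le> walk_weight g z"
  by (induction R z rule: successively.induct) (auto intro!: add_mono)

lemma walk_weight_of_int: "walk_weight (\<lambda>a b. of_int (f a b)) z = of_int (walk_weight f z)"
  by (induction f z rule: walk_weight.induct) auto

lemma walk_weight_diff_const:
  "walk_weight (\<lambda>a b. f a b - k) z = walk_weight f z - k * of_nat (length z - 1)"
  for k :: "'a::comm_ring_1"
proof (induction f z rule: walk_weight.induct)
  case (1 w x y xs) then show ?case by (simp add: algebra_simps)
qed auto

lemma successively_cut_cycle:
  assumes "successively R (as @ a # bs @ a # cs)"
  shows "successively R (as @ a # cs)" "successively R (a # bs @ [a])"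
proof -
  have "successively R ((as @ a # bs) @ a # cs)" using assms by simp
  then have "successively R (as @ a # bs @ [a])" "successively R (a # cs)"
    unfolding successively_append_Cons[of R "as @ a # bs" a cs] by simp_all
  then have "successively R (as @ [a])" "successively R (a # bs @ [a])" "successively R (a # cs)"
    unfolding successively_append_Cons[of R as a "bs @ [a]"] by simp_all
  then show "successively R (as @ a # cs)" "successively R (a # bs @ [a])"
    using successively_append_Cons[of R as a cs] by simp_all
qed

lemma walk_weight_cut_cycle:
  "walk_weight w (as @ a # bs @ a # cs) = walk_weight w (as @ a # cs) + walk_weight w (a # bs @ [a])"
  using walk_weight_append[of w "as @ a # bs" a cs] walk_weight_append[of w as a "bs @ [a]"]
    walk_weight_append[of w as a cs]
  by (simp add: ac_simps)

lemma closed_walk_split: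
  assumes cw: "closed_walk R N xs" and nd: "\<not> distinct (butlast xs)"
  obtains z1 z2 where "closed_walk R N z1" "closed_walk R N z2"
    "length z1 < length xs" "length z2 < length xs"
    "walk_weight w xs = walk_weight w z1 + walk_weight w z2"
proof -
  obtain as a bs cs where bl: "butlast xs = as @ [a] @ bs @ [a] @ cs"
    using not_distinct_decomp[OF nd] by blast
  have ne: "xs \<noteq> []" using cw unfolding closed_walk_def by auto
  define l where "l = last xs"
  have xs: "xs = as @ a # bs @ a # cs @ [l]"
    using append_butlast_last_id[OF ne] unfolding bl l_def by simp
  define z1 where "z1 = a # bs @ [a]"
  define z2 where "z2 = as @ a # cs @ [l]"
  have wxs: "successively R xs" "hd xs = last xs" "set xs \<subseteq> N"
    using cw unfolding closed_walk_def by auto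
  have w: "successively R z2" "successively R z1"
    using successively_cut_cycle[of R as a bs "cs @ [l]"] wxs(1) unfolding z1_def z2_def xs by simp_all
  have "hd xs = l" using wxs(2) unfolding l_def .
  then have "hd z2 = last z2" unfolding z2_def by (subst (asm) xs) (cases as; simp)
  then have "closed_walk R N z1" "closed_walk R N z2"
    unfolding closed_walk_def using w wxs(3) xs z1_def z2_def by auto
  moreover have "length z1 < length xs" "length z2 < length xs" unfolding z1_def z2_def xs by auto
  moreover have "walk_weight w xs = walk_weight w z1 + walk_weight w z2"
    unfolding xs z1_def z2_def walk_weight_cut_cycle by (simp add: add.commute)
  ultimately show ?thesis using that by blast
qed

lemma closed_walk_weight_le_0:
  fixes w :: "'n \<Rightarrow> 'n \<Rightarrow> 'a::ordered_comm_monoid_add"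
  assumes simple: "\<And>z. closed_walk R N z \<Longrightarrow> distinct (butlast z) \<Longrightarrow> walk_weight w z \<le> 0"
  shows "closed_walk R N z \<Longrightarrow> walk_weight w z \<le> 0"
proof (induction "length z" arbitrary: z rule: less_induct)
  case less
  show ?case
  proof (cases "distinct (butlast z)")
    case False
    then obtain z1 z2 where "closed_walk R N z1" "closed_walk R N z2"
      "length z1 < length z" "length z2 < length z"
      "walk_weight w z = walk_weight w z1 + walk_weight w z2"
      using closed_walk_split[OF less.prems] by metis
    then show ?thesis using less.hyps by (simp add: add_nonpos_nonpos)
  qed (use less.prems simple in blast)
qed

lemma shortest_positive_closed_walk:
  fixes w :: "'n \<Rightarrow> 'n \<Rightarrow> 'a::linordered_ab_group_add"
  assumes "closed_walk R N z" "0 < walk_weight w z"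
  obtains xs where "closed_walk R N xs" "0 < walk_weight w xs" "distinct (butlast xs)"
    "\<And>z. closed_walk R N z \<Longrightarrow> length z < length xs \<Longrightarrow> walk_weight w z \<le> 0"
proof -
  define P where "P n \<longleftrightarrow> (\<exists>z. closed_walk R N z \<and> 0 < walk_weight w z \<and> length z = n)" for n
  have "P (length z)" unfolding P_def using assms by blast
  then obtain xs where xs: "closed_walk R N xs" "0 < walk_weight w xs" "length xs = (LEAST n. P n)"
    using LeastI[of P] unfolding P_def by blast
  have shorter: "walk_weight w z \<le> 0" if "closed_walk R N z" "length z < length xs" for z
    using not_less_Least[of "length z" P] that xs(3) unfolding P_def by force
  have "distinct (butlast xs)"
  proof (rule ccontr)
    assume "\<not> distinct (butlast xs)"
    then obtain z1 z2 where "closed_walk R N z1" "closed_walk R N z2"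
      "length z1 < length xs" "length z2 < length xs"
      "walk_weight w xs = walk_weight w z1 + walk_weight w z2"
      using closed_walk_split[OF xs(1)] by metis
    then show False using shorter xs(2) by (metis add_nonpos_nonpos not_le)
  qed
  then show ?thesis using that xs(1,2) shorter by blast
qed

text \<open>Cutting out a closed subwalk of nonpositive weight from a walk does not decrease its weight.\<close>

lemma walk_shortcut:
  fixes w :: "'n \<Rightarrow> 'n \<Rightarrow> 'a::ordered_ab_group_add"
  assumes "successively R xs" "xs \<noteq> []" "set xs \<subseteq> N" "finite N"
    and nonpos: "\<And>z. closed_walk R N z \<Longrightarrow> walk_weight w z \<le> 0"
  shows "\<exists>ys. successively R ys \<and> ys \<noteq> [] \<and> set ys \<subseteq> N \<and> last ys = last xs \<and>
    length ys \<le> card N \<and> walk_weight w xs \<le> walk_weight w ys"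
  using assms(1-3)
proof (induction "length xs" arbitrary: xs rule: less_induct)
  case less
  show ?case
  proof (cases "distinct xs")
    case True
    then have "length xs \<le> card N" using less.prems(3) assms(4)
      by (metis card_mono distinct_card)
    then show ?thesis using less.prems by blast
  next
    case False
    obtain as a bs cs where xs: "xs = as @ [a] @ bs @ [a] @ cs"
      using not_distinct_decomp[OF False] by blast
    define ys where "ys = as @ a # cs"
    have w: "successively R ys" "successively R (a # bs @ [a])"
      using successively_cut_cycle[of R as a bs cs] less.prems(1) unfolding xs ys_def by simp_all
    have "closed_walk R N (a # bs @ [a])" unfolding closed_walk_def using w(2) less.prems(3) xs by auto
    then have "walk_weight w (a # bs @ [a]) \<le> 0" by (rule nonpos)
    then have le: "walk_weight w xs \<le> walk_weight w ys"
      unfolding xs ys_def using walk_weight_cut_cycle[of w as a bs cs] by simp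
    have "length ys < length xs" unfolding ys_def xs by simp
    moreover have "set ys \<subseteq> N" using less.prems(3) unfolding ys_def xs by auto
    ultimately obtain zs where zs: "successively R zs" "zs \<noteq> []" "set zs \<subseteq> N" "last zs = last ys"
      "length zs \<le> card N" "walk_weight w ys \<le> walk_weight w zs"
      using less.hyps[of ys] w(1) unfolding ys_def by blast
    moreover have "last ys = last xs" unfolding ys_def xs by (cases cs) auto
    moreover have "walk_weight w xs \<le> walk_weight w zs" using le zs(6) by (rule order_trans)
    ultimately show ?thesis by auto
  qed
qed

text \<open>Bellman--Ford: the potential of y is the largest weight of a short walk ending in y.\<close>

lemma potential_if_closed_walks_nonpos:
  fixes w :: "'n \<Rightarrow> 'n \<Rightarrow> 'a::linordered_ab_group_add"
  assumes fin: "finite N" and nonpos: "\<And>z. closed_walk R N z \<Longrightarrow> walk_weight w z \<le> 0"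
  obtains p where "\<forall>x\<in>N. \<forall>y\<in>N. R x y \<longrightarrow> p x + w x y \<le> p y"
proof -
  define W where "W y = {xs. successively R xs \<and> xs \<noteq> [] \<and> set xs \<subseteq> N \<and> last xs = y \<and>
    length xs \<le> card N}" for y
  define p where "p y = Max (walk_weight w ` W y)" for y
  have finW: "finite (W y)" for y
    using finite_lists_length_le[OF fin] by (rule finite_subset[rotated]) (auto simp: W_def)
  have "[y] \<in> W y" if "y \<in> N" for y
    using that fin by (auto simp: W_def Suc_le_eq card_gt_0_iff)
  then have p_attained: "p x \<in> walk_weight w ` W x" if "x \<in> N" for x
    unfolding p_def using finW that by (intro Max_in) auto
  have "p x + w x y \<le> p y" if x: "x \<in> N" and y: "y \<in> N" and R: "R x y" for x y
  proof -
    obtain zs where zs: "successively R zs" "zs \<noteq> []" "set zs \<subseteq> N" "last zs = x"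
      "walk_weight w zs = p x"
      using p_attained[OF x] unfolding W_def by auto
    have "successively R (zs @ [y])" using zs R by (simp add: successively_append_iff)
    moreover have "set (zs @ [y]) \<subseteq> N" using zs(3) y by simp
    ultimately obtain ys where "successively R ys \<and> ys \<noteq> [] \<and> set ys \<subseteq> N \<and> last ys = y \<and>
      length ys \<le> card N \<and> walk_weight w (zs @ [y]) \<le> walk_weight w ys"
      using walk_shortcut[of R "zs @ [y]" N w, OF _ _ _ fin nonpos] by auto
    then have ys: "ys \<in> W y" "walk_weight w (zs @ [y]) \<le> walk_weight w ys"
      unfolding W_def by auto
    have "walk_weight w ys \<le> p y" unfolding p_def using finW ys(1) by (intro Max_ge) auto
    moreover have "walk_weight w (zs @ [y]) = p x + w x y" using walk_weight_snoc zs by metis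
    ultimately show "p x + w x y \<le> p y" using ys(2) by simp
  qed
  then show ?thesis using that by blast
qed

section \<open>The tree structure of an arborescence\<close>

lemma aedge_in:
  assumes "arborescence V E tail head B" "v \<in> V"
  shows "aedge head B v \<in> B" "head (aedge head B v) = v"
proof -
  have "\<exists>!e. e \<in> B \<and> head e = v" using assms unfolding arborescence_def by blast
  then have "aedge head B v \<in> B \<and> head (aedge head B v) = v" unfolding aedge_def by (rule theI')
  then show "aedge head B v \<in> B" "head (aedge head B v) = v" by auto
qed

locale rooted_arborescence =
  fixes V :: "'v set" and r :: 'v and E :: "'e set" and tail head :: "'e \<Rightarrow> 'v" and A :: "'e set"
  assumes finite_V: "finite V" and finite_E: "finite E" and root_notin_V: "r \<notin> V"
    and ends: "\<forall>e\<in>E. tail e \<in> V \<union> {r} \<and> head e \<in> V"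
    and arborescence_A: "arborescence V E tail head A"
begin

abbreviation tree_edge :: "'v \<Rightarrow> 'e" where "tree_edge \<equiv> aedge head A"

definition parent :: "'v \<Rightarrow> 'v" where "parent v = tail (tree_edge v)"

lemma A_subset_E: "A \<subseteq> E" and uacyclic_A: "uacyclic tail head A"
  and A_unique: "\<And>v. v \<in> V \<Longrightarrow> \<exists>!e. e \<in> A \<and> head e = v"
  using arborescence_A unfolding arborescence_def by auto

lemma tree_edge_in_A: "v \<in> V \<Longrightarrow> tree_edge v \<in> A"
  and head_tree_edge [simp]: "v \<in> V \<Longrightarrow> head (tree_edge v) = v"
  using aedge_in[OF arborescence_A] by blast+

lemma tree_edge_in_E: "v \<in> V \<Longrightarrow> tree_edge v \<in> E"
  using tree_edge_in_A A_subset_E by blast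

lemma tail_tree_edge [simp]: "tail (tree_edge v) = parent v"
  unfolding parent_def ..

lemma tree_edge_head:
  assumes "e \<in> A" shows "tree_edge (head e) = e"
proof -
  have "head e \<in> V" using assms A_subset_E ends by blast
  then show ?thesis using A_unique[of "head e"] tree_edge_in_A head_tree_edge assms by blast
qed

lemma inj_on_tree_edge: "inj_on tree_edge V"
  by (metis head_tree_edge inj_onI)

lemma parent_in: "v \<in> V \<Longrightarrow> parent v \<in> V \<union> {r}"
  using tree_edge_in_E[of v] ends unfolding parent_def by blast

lemma A_eq_tree_edges: "A \<inter> C = tree_edge ` {v\<in>V. tree_edge v \<in> C}"
proof
  show "A \<inter> C \<subseteq> tree_edge ` {v\<in>V. tree_edge v \<in> C}"
  proof
    fix a assume a: "a \<in> A \<inter> C"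
    then have "head a \<in> V" "tree_edge (head a) = a" using A_subset_E ends tree_edge_head by auto
    then show "a \<in> tree_edge ` {v\<in>V. tree_edge v \<in> C}" using a by force
  qed
qed (use tree_edge_in_A in auto)

lemma card_A_Int: "card (A \<inter> C) = card {v\<in>V. tree_edge v \<in> C}"
  unfolding A_eq_tree_edges by (rule card_image, rule inj_on_subset[OF inj_on_tree_edge]) auto

lemma no_parent_cycle:
  assumes ij: "i < j" "(parent ^^ i) v = (parent ^^ j) v"
    and inj: "inj_on (\<lambda>k. (parent ^^ k) v) {i..<j}" and V: "\<And>k. (parent ^^ k) v \<in> V"
  shows False
proof -
  define f where "f k = (parent ^^ k) v" for k
  have dvs: "distinct (map f [i..<j])" using inj unfolding f_def by (simp add: distinct_map)
  have f_V: "f k \<in> V" and f_Suc: "parent (f k) = f (Suc k)" and fij: "f i = f j" for k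
    using V ij(2) unfolding f_def by simp_all
  define es where "es = map (tree_edge \<circ> f) [i..<j]"
  define vs where "vs = map f [i..<Suc j]"
  have "ucycle tail head es vs"
    unfolding ucycle_def
  proof (intro conjI allI impI)
    show "es \<noteq> []" "length vs = length es + 1" using ij unfolding es_def vs_def by simp_all
    have "inj_on tree_edge (set (map f [i..<j]))"
      using inj_on_tree_edge by (rule inj_on_subset) (use f_V in auto)
    then show "distinct es" unfolding es_def using dvs by (simp add: distinct_map comp_inj_on)
    show "vs ! 0 = vs ! length es" using ij(1) fij unfolding es_def vs_def by (simp del: upt_Suc)
    show "distinct (take (length es) vs)"
      unfolding es_def vs_def using dvs ij by (simp add: take_map del: upt_Suc)
    fix t assume "t < length es"
    then have "t < j - i" unfolding es_def by simp
    then show "{tail (es ! t), head (es ! t)} = {vs ! t, vs ! (t + 1)}"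
      unfolding es_def vs_def using f_V f_Suc by (auto simp: insert_commute simp del: upt_Suc)
  qed
  moreover have "set es \<subseteq> A" unfolding es_def using tree_edge_in_A f_V by auto
  ultimately show False using uacyclic_A unfolding uacyclic_def by blast
qed

lemma parent_iterates_reach_root:
  assumes v: "v \<in> V" shows "\<exists>n. (parent ^^ n) v = r"
proof (rule ccontr)
  assume nr: "\<nexists>n. (parent ^^ n) v = r"
  define f where "f n = (parent ^^ n) v" for n
  have f_V: "f n \<in> V" for n
  proof (induction n)
    case (Suc n)
    then have "f (Suc n) \<in> V \<union> {r}" using parent_in by (simp add: f_def)
    then show ?case using nr unfolding f_def by blast
  qed (use v f_def in simp)
  have "\<not> inj_on f {..card V}"
  proof
    assume "inj_on f {..card V}"
    then have "card (f ` {..card V}) = Suc (card V)" by (simp add: card_image)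
    moreover have "card (f ` {..card V}) \<le> card V" using f_V finite_V by (intro card_mono) auto
    ultimately show False by simp
  qed
  define P where "P j \<longleftrightarrow> (\<exists>i<j. f i = f j)" for j
  have "\<exists>j. P j" using \<open>\<not> inj_on f {..card V}\<close> unfolding P_def inj_on_def by (metis linorder_neqE_nat)
  then obtain j where j: "P j" and least: "\<And>b. b < j \<Longrightarrow> \<not> P b"
    using exists_least_iff[of P] by blast
  obtain i where ij: "i < j" "f i = f j" using j unfolding P_def by blast
  have "inj_on f {i..<j}"
    by (rule inj_onI) (metis P_def atLeastLessThan_iff least linorder_neqE_nat)
  then show False using no_parent_cycle[OF ij[unfolded f_def]] f_V unfolding f_def by blast
qed

definition depth :: "'v \<Rightarrow> nat" where "depth x = (LEAST n. (parent ^^ n) x = r)"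

lemma depth_root: "depth r = 0"
  unfolding depth_def by simp

lemma depth_parent: assumes v: "v \<in> V" shows "depth v = Suc (depth (parent v))"
proof -
  obtain n where "(parent ^^ n) v = r" using parent_iterates_reach_root[OF v] by blast
  then have n0: "(parent ^^ depth v) v = r" unfolding depth_def by (rule LeastI)
  have "depth v \<noteq> 0" using n0 v root_notin_V by (metis funpow_0)
  then obtain m where m: "depth v = Suc m" by (cases "depth v") auto
  have "(parent ^^ m) (parent v) = r"
    using n0 unfolding m by (simp add: funpow_Suc_right del: funpow.simps)
  then have le: "depth (parent v) \<le> m" and "(parent ^^ depth (parent v)) (parent v) = r"
    unfolding depth_def by (rule Least_le, rule LeastI)
  then have "(parent ^^ Suc (depth (parent v))) v = r" by (simp add: funpow_Suc_right del: funpow.simps)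
  then have "depth v \<le> Suc (depth (parent v))" unfolding depth_def by (rule Least_le)
  then show ?thesis using le m by simp
qed

lemma tree_induct [consumes 1, case_names root step]:
  assumes x: "x \<in> V \<union> {r}" and root: "P r" and step: "\<And>v. v \<in> V \<Longrightarrow> P (parent v) \<Longrightarrow> P v"
  shows "P x"
  using x
proof (induction "depth x" arbitrary: x rule: less_induct)
  case less
  show ?case
  proof (cases "x = r")
    case False
    then have "x \<in> V" using less.prems by simp
    then show ?thesis using less.hyps[of "parent x"] parent_in depth_parent step by simp
  qed (use root in simp)
qed

definition ancestors :: "'v \<Rightarrow> 'v set" where
  "ancestors x = (\<lambda>i. (parent ^^ i) x) ` {..depth x}"

lemma ancestors_root: "ancestors r = {r}"
  unfolding ancestors_def depth_root by simp

lemma ancestors_parent: "v \<in> V \<Longrightarrow> ancestors v = insert v (ancestors (parent v))"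
  unfolding ancestors_def depth_parent atMost_Suc_eq_insert_0
  by (simp add: image_image funpow_Suc_right del: funpow.simps)

lemma self_in_ancestors: "x \<in> ancestors x"
  unfolding ancestors_def by (auto intro!: image_eqI[of _ _ 0])

lemma ancestors_subset: "x \<in> V \<union> {r} \<Longrightarrow> ancestors x \<subseteq> V \<union> {r}"
  by (induction rule: tree_induct) (auto simp: ancestors_root ancestors_parent)

lemma root_in_ancestors: "x \<in> V \<union> {r} \<Longrightarrow> r \<in> ancestors x"
  by (induction rule: tree_induct) (auto simp: ancestors_root ancestors_parent)

lemma depth_ancestor:
  "x \<in> V \<union> {r} \<Longrightarrow> y \<in> ancestors x \<Longrightarrow> depth y \<le> depth x \<and> (depth y = depth x \<longrightarrow> y = x)"
proof (induction arbitrary: y rule: tree_induct)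
  case (step v)
  show ?case
  proof (cases "y = v")
    case False
    then have "y \<in> ancestors (parent v)" using step(3) ancestors_parent[OF step(1)] by simp
    then have "depth y \<le> depth (parent v)" using step(2) by blast
    then show ?thesis using depth_parent[OF step(1)] by simp
  qed simp
qed (simp add: ancestors_root)

lemma ancestors_trans: "x \<in> V \<union> {r} \<Longrightarrow> y \<in> ancestors x \<Longrightarrow> ancestors y \<subseteq> ancestors x"
proof (induction arbitrary: y rule: tree_induct)
  case (step v)
  then show ?case using ancestors_parent[OF step(1)] by (cases "y = v") auto
qed (simp add: ancestors_root)

lemma ancestors_linear:
  "x \<in> V \<union> {r} \<Longrightarrow> y \<in> ancestors x \<Longrightarrow> z \<in> ancestors x \<Longrightarrow> y \<in> ancestors z \<or> z \<in> ancestors y"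
proof (induction arbitrary: y z rule: tree_induct)
  case (step v)
  then show ?case using ancestors_parent[OF step(1)] self_in_ancestors by (cases "y = v \<or> z = v") auto
qed (simp add: ancestors_root)

lemma ancestors_antisym:
  assumes "x \<in> V \<union> {r}" "y \<in> V \<union> {r}" "y \<in> ancestors x" "x \<in> ancestors y" shows "x = y"
  using depth_ancestor[OF assms(1,3)] depth_ancestor[OF assms(2,4)] by simp

lemma ancestors_parent_eq: assumes v: "v \<in> V" shows "ancestors (parent v) = ancestors v - {v}"
proof -
  have "v \<notin> ancestors (parent v)"
    using depth_ancestor[OF parent_in[OF v], of v] depth_parent[OF v] by auto
  then show ?thesis using ancestors_parent[OF v] by auto
qed

text \<open>tree_path a b is the set of vertices whose tree edge lies on the path between a and b
  in the tree A; for an edge e, edge_path e is the set of vertices whose tree edge lies on the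
  cycle that e closes with A.\<close>

definition tree_path :: "'v \<Rightarrow> 'v \<Rightarrow> 'v set" where
  "tree_path a b = (ancestors a - ancestors b) \<union> (ancestors b - ancestors a)"

definition edge_path :: "'e \<Rightarrow> 'v set" where "edge_path e = tree_path (tail e) (head e)"

lemma tree_path_sym: "tree_path a b = tree_path b a"
  unfolding tree_path_def by blast

lemma tree_path_subset_V: "a \<in> V \<union> {r} \<Longrightarrow> b \<in> V \<union> {r} \<Longrightarrow> tree_path a b \<subseteq> V"
  unfolding tree_path_def using ancestors_subset root_in_ancestors by blast

lemma edge_path_subset_V: "e \<in> E \<Longrightarrow> edge_path e \<subseteq> V"
  unfolding edge_path_def using ends by (simp add: tree_path_subset_V)

lemma tree_path_parent: "v \<in> V \<Longrightarrow> tree_path (parent v) v = {v}"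
  unfolding tree_path_def using ancestors_parent_eq[of v] self_in_ancestors[of v] by auto

lemma edge_path_tree_edge: "v \<in> V \<Longrightarrow> edge_path (tree_edge v) = {v}"
  unfolding edge_path_def by (simp add: tree_path_parent)

lemma tree_path_parent_step:
  assumes a: "a \<in> V \<union> {r}" and b: "b \<in> V \<union> {r}" and ab: "a \<notin> ancestors b"
  shows "a \<in> V" "a \<in> tree_path a b" "tree_path (parent a) b = tree_path a b - {a}"
proof -
  show aV: "a \<in> V" using a ab root_in_ancestors[OF b] by auto
  show "a \<in> tree_path a b" unfolding tree_path_def using ab self_in_ancestors by blast
  show "tree_path (parent a) b = tree_path a b - {a}"
    unfolding tree_path_def ancestors_parent_eq[OF aV] using ab by blast
qed

lemma uconn_tree_path:
  assumes "a \<in> V \<union> {r}" "b \<in> V \<union> {r}" "tree_path a b \<subseteq> U" "U \<subseteq> V"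
  shows "uconn tail head (tree_edge ` U) a b"
  using assms(1-3)
proof (induction "depth a + depth b" arbitrary: a b rule: less_induct)
  case less
  have edge: "uconn tail head (tree_edge ` U) (parent v) v" if "v \<in> U" for v
    using uconn_ends[of "tree_edge v" "tree_edge ` U" tail head] that assms(4) by auto
  consider "a = b" | "a \<notin> ancestors b" | "b \<notin> ancestors a"
    using ancestors_antisym less.prems(1,2) by blast
  then show ?case
  proof cases
    case 2
    note step = tree_path_parent_step[OF less.prems(1,2) 2]
    have "uconn tail head (tree_edge ` U) (parent a) b"
    proof (rule less.hyps)
      show "depth (parent a) + depth b < depth a + depth b" using depth_parent[OF step(1)] by simp
      show "tree_path (parent a) b \<subseteq> U" unfolding step(3) using less.prems(3) by blast
      show "parent a \<in> V \<union> {r}" by (rule parent_in[OF step(1)])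
    qed (rule less.prems(2))
    moreover have "a \<in> U" using less.prems(3) step(2) by (rule subsetD)
    then have "uconn tail head (tree_edge ` U) a (parent a)" by (rule uconn_sym[OF edge])
    ultimately show ?thesis by (rule rtranclp_trans[rotated])
  next
    case 3
    note step = tree_path_parent_step[OF less.prems(2,1) 3]
    have "uconn tail head (tree_edge ` U) a (parent b)"
    proof (rule less.hyps)
      show "depth a + depth (parent b) < depth a + depth b" using depth_parent[OF step(1)] by simp
      show "tree_path a (parent b) \<subseteq> U"
        using less.prems(3) unfolding tree_path_sym[of a] step(3) by blast
      show "parent b \<in> V \<union> {r}" by (rule parent_in[OF step(1)])
    qed (rule less.prems(1))
    moreover have "b \<in> U" using step(2) less.prems(3) tree_path_sym[of a b] by blast
    then have "uconn tail head (tree_edge ` U) (parent b) b" by (rule edge)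
    ultimately show ?thesis by (rule rtranclp_trans)
  qed simp
qed

lemma tree_path_subset_if_uconn:
  assumes "uconn tail head (tree_edge ` U) a b" "U \<subseteq> V"
  shows "tree_path a b \<subseteq> U"
  using assms(1)
proof (induction rule: rtranclp_induct)
  case (step y z)
  from step(2) obtain u where u: "u \<in> U" "{parent u, u} = {y, z}"
    unfolding uadj_def using assms(2) by auto
  then have "tree_path y z = {u}"
    using tree_path_parent[of u] tree_path_sym[of u "parent u"] assms(2) by (auto simp: doubleton_eq_iff)
  moreover have "tree_path a z \<subseteq> tree_path a y \<union> tree_path y z" unfolding tree_path_def by blast
  ultimately show ?case using step(3) u(1) by auto
qed (simp add: tree_path_def)

lemma tree_path_split:
  assumes a1: "a1 \<in> V \<union> {r}" and a2: "a2 \<in> V \<union> {r}"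
    and s: "s \<in> ancestors a1" "s \<notin> ancestors a2"
  shows "s \<in> V" "uconn tail head (tree_edge ` (tree_path a1 a2 - {s})) a1 s"
    "uconn tail head (tree_edge ` (tree_path a1 a2 - {s})) (parent s) a2"
proof -
  show sV: "s \<in> V" using s ancestors_subset[OF a1] root_in_ancestors[OF a2] by blast
  have U: "tree_path a1 a2 - {s} \<subseteq> V" using tree_path_subset_V[OF a1 a2] by blast
  have anc_s: "ancestors s \<subseteq> ancestors a1" using ancestors_trans[OF a1 s(1)] .
  have not_a2: "u \<notin> ancestors a2" if "u \<in> ancestors a1" "u \<notin> ancestors s" for u
  proof
    assume "u \<in> ancestors a2"
    moreover have "s \<in> ancestors u" using ancestors_linear[OF a1 that(1) s(1)] that(2) by blast
    ultimately show False using ancestors_trans[OF a2] s(2) by blast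
  qed
  have "tree_path a1 s \<subseteq> tree_path a1 a2 - {s}"
    using anc_s not_a2 self_in_ancestors[of s] unfolding tree_path_def by blast
  then show "uconn tail head (tree_edge ` (tree_path a1 a2 - {s})) a1 s"
    using uconn_tree_path[OF a1 _ _ U] sV by blast
  have "tree_path (parent s) a2 \<subseteq> tree_path a1 a2 - {s}"
    using anc_s not_a2 s(2) unfolding tree_path_def ancestors_parent_eq[OF sV] by blast
  then show "uconn tail head (tree_edge ` (tree_path a1 a2 - {s})) (parent s) a2"
    using uconn_tree_path[OF parent_in[OF sV] a2 _ U] by blast
qed

text \<open>Together with e, the remaining tree edges on the cycle of e still connect the ends of the
  removed tree edge.\<close>

lemma uacyclic_tree_exchange:
  assumes T: "uacyclic tail head T" and e: "e \<in> E" "e \<notin> T" and s: "s \<in> edge_path e"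
    and sT: "tree_edge s \<in> T" and path: "tree_edge ` (edge_path e - {s}) \<subseteq> T"
  shows "uacyclic tail head (insert e (T - {tree_edge s}))"
proof (rule uacyclic_exchange[OF T sT e(2)])
  let ?G = "insert e (T - {tree_edge s})"
  have t: "tail e \<in> V \<union> {r}" and h: "head e \<in> V \<union> {r}" using ends e(1) by auto
  have sV: "s \<in> V" using s edge_path_subset_V[OF e(1)] by blast
  have "tree_edge ` (edge_path e - {s}) \<subseteq> ?G"
    using path inj_on_tree_edge edge_path_subset_V[OF e(1)] sV by (auto simp: inj_on_eq_iff)
  then have sub: "uconn tail head ?G x y"
    if "uconn tail head (tree_edge ` (edge_path e - {s})) x y" for x y using that uconn_mono by metis
  have eG: "uconn tail head ?G (tail e) (head e)" by (rule uconn_ends) simp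
  consider "s \<in> ancestors (tail e)" "s \<notin> ancestors (head e)"
    | "s \<in> ancestors (head e)" "s \<notin> ancestors (tail e)"
    using s unfolding edge_path_def tree_path_def by blast
  then have "uconn tail head ?G (parent s) s"
  proof cases
    case 1
    note split = tree_path_split[OF t h 1, folded edge_path_def]
    have "uconn tail head ?G (parent s) (head e)" using sub[OF split(3)] .
    also have "uconn tail head ?G (head e) (tail e)" using uconn_sym[OF eG] .
    also have "uconn tail head ?G (tail e) s" using sub[OF split(2)] .
    finally show ?thesis .
  next
    case 2
    note split = tree_path_split[OF h t 2, folded tree_path_sym[of "tail e"] edge_path_def]
    have "uconn tail head ?G (parent s) (tail e)" using sub[OF split(3)] .
    also have "uconn tail head ?G (tail e) (head e)" using eG .
    also have "uconn tail head ?G (head e) s" using sub[OF split(2)] .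
    finally show ?thesis .
  qed
  then show "uconn tail head ?G (tail (tree_edge s)) (head (tree_edge s))" using sV by simp
qed

end

section \<open>Popularity and weak duality\<close>

lemma wt_cases: "wt head pref A e \<in> {-1, 0, 1}"
  unfolding wt_def Let_def by auto

lemma sum_sets_containing:
  fixes y :: "'e set \<Rightarrow> real"
  assumes "finite V" "finite E"
  shows "(\<Sum>v\<in>V. \<Sum>S \<in> {S. S \<subseteq> E \<and> b v \<in> S}. y S) = (\<Sum>S \<in> Pow E. y S * real (card {v\<in>V. b v \<in> S}))"
proof -
  have "(\<Sum>S \<in> {S. S \<subseteq> E \<and> b v \<in> S}. y S) = (\<Sum>S \<in> Pow E. y S * of_bool (b v \<in> S))" for v
  proof -
    have "(\<Sum>S \<in> Pow E. y S * of_bool (b v \<in> S)) = (\<Sum>S \<in> Pow E. if b v \<in> S then y S else 0)"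
      by (rule sum.cong) auto
    also have "\<dots> = (\<Sum>S \<in> {S \<in> Pow E. b v \<in> S}. y S)"
      using assms(2) by (intro sum.inter_filter[symmetric]) simp
    also have "{S \<in> Pow E. b v \<in> S} = {S. S \<subseteq> E \<and> b v \<in> S}" by auto
    finally show ?thesis by simp
  qed
  then have "(\<Sum>v\<in>V. \<Sum>S \<in> {S. S \<subseteq> E \<and> b v \<in> S}. y S) =
      (\<Sum>S \<in> Pow E. \<Sum>v\<in>V. y S * of_bool (b v \<in> S))"
    by (simp add: sum.swap[of _ V])
  also have "\<dots> = (\<Sum>S \<in> Pow E. y S * real (card {v\<in>V. b v \<in> S}))"
  proof (rule sum.cong)
    fix S
    have "(\<Sum>v\<in>V. of_bool (b v \<in> S) :: real) = real (card {v\<in>V. b v \<in> S})"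
      using assms(1) by (simp add: Int_def conj_commute)
    then show "(\<Sum>v\<in>V. y S * of_bool (b v \<in> S)) = y S * real (card {v\<in>V. b v \<in> S})"
      by (simp add: sum_distrib_left[symmetric])
  qed simp
  finally show ?thesis .
qed

lemma card_aedge_in_le_grank:
  assumes B: "arborescence V E tail head B" and S: "finite S"
  shows "card {v\<in>V. aedge head B v \<in> S} \<le> grank tail head S"
proof -
  have "inj_on (aedge head B) {v\<in>V. aedge head B v \<in> S}"
    by (rule inj_onI) (metis (no_types, lifting) aedge_in(2)[OF B] mem_Collect_eq)
  then have "card {v\<in>V. aedge head B v \<in> S} = card (aedge head B ` {v\<in>V. aedge head B v \<in> S})"
    by (simp add: card_image)
  also have "\<dots> \<le> grank tail head S"
  proof (rule grank_ge[OF S])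
    have "uacyclic tail head B" using B unfolding arborescence_def by blast
    then show "uacyclic tail head (aedge head B ` {v\<in>V. aedge head B v \<in> S})"
      by (rule uacyclic_subset) (use aedge_in(1)[OF B] in auto)
  qed auto
  finally show ?thesis .
qed

locale arborescence_prefs = rooted_arborescence V r E tail head A
  for V :: "'v set" and r :: 'v and E :: "'e set" and tail head :: "'e \<Rightarrow> 'v" and A :: "'e set" +
  fixes pref :: "'v \<Rightarrow> 'e \<Rightarrow> 'e \<Rightarrow> bool"
  assumes irrefl: "\<forall>v \<in> V. \<forall>e \<in> E. head e = v \<longrightarrow> \<not> pref v e e"
    and trans: "\<forall>v \<in> V. \<forall>e \<in> E. \<forall>f \<in> E. \<forall>g \<in> E.
                  head e = v \<and> head f = v \<and> head g = v \<and> pref v e f \<and> pref v f g \<longrightarrow> pref v e g"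
begin

abbreviation wtA :: "'e \<Rightarrow> int" where "wtA \<equiv> wt head pref A"

lemma wt_tree_edge: "v \<in> V \<Longrightarrow> wtA (tree_edge v) = 0"
  using irrefl tree_edge_in_E unfolding wt_def Let_def by simp

definition wt_sum :: "'e set \<Rightarrow> int" where "wt_sum B = (\<Sum>v\<in>V. wtA (aedge head B v))"

lemma wt_sum_eq_phi_diff:
  assumes B: "arborescence V E tail head B"
  shows "wt_sum B = int (phi V head pref B A) - int (phi V head pref A B)"
proof -
  define a where "a v = tree_edge v" for v
  define b where "b v = aedge head B v" for v
  have wt_b: "wtA (b v) = of_bool (pref v (b v) (a v)) - of_bool (pref v (a v) (b v))"
    if v: "v \<in> V" for v
  proof -
    have E: "a v \<in> E" "b v \<in> E" "head (b v) = v"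
      using v tree_edge_in_E aedge_in[OF B v] B unfolding a_def b_def arborescence_def by auto
    then have "\<not> (pref v (b v) (a v) \<and> pref v (a v) (b v))"
      using trans irrefl v by (metis head_tree_edge a_def)
    then show ?thesis unfolding wt_def Let_def E(3) a_def by auto
  qed
  have "wt_sum B = (\<Sum>v\<in>V. of_bool (pref v (b v) (a v)) - of_bool (pref v (a v) (b v)) :: int)"
    unfolding wt_sum_def b_def[symmetric] using wt_b by (intro sum.cong) auto
  also have "\<dots> = int (card {v\<in>V. pref v (b v) (a v)}) - int (card {v\<in>V. pref v (a v) (b v)})"
    using finite_V by (simp add: sum_subtractf Int_def conj_commute)
  finally show ?thesis unfolding phi_def a_def b_def .
qed

lemma popular_iff_wt_sum_nonpos:
  "popular V E tail head pref A \<longleftrightarrow> (\<forall>B. arborescence V E tail head B \<longrightarrow> wt_sum B \<le> 0)"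
  unfolding popular_def using arborescence_A wt_sum_eq_phi_diff by auto

definition dual_feasible :: "('e set \<Rightarrow> real) \<Rightarrow> ('v \<Rightarrow> real) \<Rightarrow> bool" where
  "dual_feasible y \<alpha> \<longleftrightarrow> (\<forall>S \<subseteq> E. y S \<ge> 0) \<and>
     (\<forall>v \<in> V. \<forall>e \<in> E. head e = v \<longrightarrow>
        (\<Sum>S \<in> {S. S \<subseteq> E \<and> e \<in> S}. y S) + \<alpha> v \<ge> real_of_int (wtA e))"

definition dual_value :: "('e set \<Rightarrow> real) \<Rightarrow> ('v \<Rightarrow> real) \<Rightarrow> real" where
  "dual_value y \<alpha> = (\<Sum>S \<in> Pow E. real (grank tail head S) * y S) + (\<Sum>v \<in> V. \<alpha> v)"

definition chain_certificate :: "('e set \<Rightarrow> real) \<Rightarrow> ('v \<Rightarrow> real) \<Rightarrow> bool" where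
  "chain_certificate y \<alpha> \<longleftrightarrow>
    (let \<C> = {S. S \<subseteq> E \<and> y S > 0} in
       (\<forall>S \<subseteq> E. y S \<in> \<int>) \<and> is_chain \<C> \<and>
       (\<forall>C \<in> \<C>. gspan tail head E (A \<inter> C) = C) \<and>
       (\<forall>C \<in> \<C>. C \<noteq> {}) \<and> E \<in> \<C> \<and>
       (\<forall>C \<in> \<C>. y C = 1) \<and>
       (\<forall>v \<in> V. \<alpha> v = - real (card {C \<in> \<C>. aedge head A v \<in> C})))"

lemma weak_duality:
  assumes y: "dual_feasible y \<alpha>" and B: "arborescence V E tail head B"
  shows "real_of_int (wt_sum B) \<le> dual_value y \<alpha>"
proof -
  define b where "b v = aedge head B v" for v
  have b: "b v \<in> E" "head (b v) = v" if "v \<in> V" for v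
    using aedge_in[OF B that] B unfolding b_def arborescence_def by auto
  have "real_of_int (wt_sum B) = (\<Sum>v\<in>V. real_of_int (wtA (b v)))" unfolding wt_sum_def b_def by simp
  also have "\<dots> \<le> (\<Sum>v\<in>V. (\<Sum>S \<in> {S. S \<subseteq> E \<and> b v \<in> S}. y S) + \<alpha> v)"
    using y b unfolding dual_feasible_def by (intro sum_mono) blast
  also have "\<dots> = (\<Sum>S \<in> Pow E. y S * real (card {v\<in>V. b v \<in> S})) + (\<Sum>v\<in>V. \<alpha> v)"
    by (simp add: sum.distrib sum_sets_containing[OF finite_V finite_E])
  also have "\<dots> \<le> dual_value y \<alpha>"
    unfolding dual_value_def
  proof (intro add_right_mono sum_mono)
    fix S assume "S \<in> Pow E"
    then have "card {v\<in>V. b v \<in> S} \<le> grank tail head S" "y S \<ge> 0"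
      using card_aedge_in_le_grank[OF B] finite_E y unfolding b_def dual_feasible_def
      by (auto intro: finite_subset)
    then show "y S * real (card {v\<in>V. b v \<in> S}) \<le> real (grank tail head S) * y S"
      by (simp add: mult.commute mult_left_mono)
  qed
  finally show ?thesis .
qed

lemma popular_if_dual_value_0:
  "dual_feasible y \<alpha> \<Longrightarrow> dual_value y \<alpha> = 0 \<Longrightarrow> popular V E tail head pref A"
  unfolding popular_iff_wt_sum_nonpos using weak_duality by fastforce

end

section \<open>Improving exchanges along cycles\<close>

context arborescence_prefs
begin

text \<open>Along an exchange arc from v to u, an edge entering v may replace the tree edge of u.\<close>

definition exchange_arc :: "'v \<Rightarrow> 'v \<Rightarrow> bool" where
  "exchange_arc v u \<longleftrightarrow> (\<exists>e\<in>E. head e = v \<and> u \<in> edge_path e)"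

definition exchange_gain :: "'v \<Rightarrow> 'v \<Rightarrow> int" where
  "exchange_gain v u = Max {wtA e | e. e \<in> E \<and> head e = v \<and> u \<in> edge_path e}"

lemma finite_exchange_gains: "finite {wtA e | e. e \<in> E \<and> head e = v \<and> u \<in> edge_path e}"
  by (rule finite_subset[of _ "wtA ` E"]) (use finite_E in auto)

lemma exchange_gain_ge: "e \<in> E \<Longrightarrow> u \<in> edge_path e \<Longrightarrow> wtA e \<le> exchange_gain (head e) u"
  unfolding exchange_gain_def by (rule Max_ge[OF finite_exchange_gains]) auto

lemma exchange_gain_attained:
  assumes "exchange_arc v u"
  obtains e where "e \<in> E" "head e = v" "u \<in> edge_path e" "wtA e = exchange_gain v u"
proof -
  have "{wtA e | e. e \<in> E \<and> head e = v \<and> u \<in> edge_path e} \<noteq> {}"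
    using assms unfolding exchange_arc_def by auto
  then have "exchange_gain v u \<in> {wtA e | e. e \<in> E \<and> head e = v \<and> u \<in> edge_path e}"
    unfolding exchange_gain_def using finite_exchange_gains by (rule Max_in[rotated])
  then show ?thesis using that by auto
qed

end

text \<open>A shortest cycle of positive gain in the exchange graph. Performing all of its exchanges at
  once gives an arborescence of positive weight; minimality is what keeps the result acyclic.\<close>

locale exchange_cycle = arborescence_prefs V r E tail head A pref
  for V :: "'v set" and r :: 'v and E :: "'e set" and tail head :: "'e \<Rightarrow> 'v" and A :: "'e set"
    and pref :: "'v \<Rightarrow> 'e \<Rightarrow> 'e \<Rightarrow> bool" +
  fixes m :: nat and x :: "nat \<Rightarrow> 'v"
  assumes m_pos: "0 < m" and inj_x: "inj_on x {..<m}" and x_in_V: "\<forall>i<m. x i \<in> V"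
    and arcs: "\<forall>i<m. exchange_arc (x i) (x (Suc i mod m))"
    and gain_pos: "0 < (\<Sum>i<m. exchange_gain (x i) (x (Suc i mod m)))"
    and shorter_nonpos: "\<forall>z. closed_walk exchange_arc V z \<and> length z \<le> m \<longrightarrow>
      walk_weight exchange_gain z \<le> 0"
begin

definition Cyc :: "'v set" where "Cyc = x ` {..<m}"
definition pos :: "'v \<Rightarrow> nat" where "pos b = inv_into {..<m} x b"
definition succ :: "'v \<Rightarrow> 'v" where "succ b = x (Suc (pos b) mod m)"

lemma pos_x: "i < m \<Longrightarrow> pos (x i) = i"
  unfolding pos_def using inj_x by simp

lemma x_pos: "b \<in> Cyc \<Longrightarrow> x (pos b) = b" and pos_less: "b \<in> Cyc \<Longrightarrow> pos b < m"
  unfolding pos_def Cyc_def using inj_x by (auto simp: f_inv_into_f)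

lemma x_in_Cyc: "i < m \<Longrightarrow> x i \<in> Cyc"
  unfolding Cyc_def by simp

lemma Cyc_subset_V: "Cyc \<subseteq> V"
  unfolding Cyc_def using x_in_V by auto

lemma finite_Cyc: "finite Cyc"
  unfolding Cyc_def by simp

lemma card_Cyc: "card Cyc = m"
  unfolding Cyc_def using inj_x by (simp add: card_image)

lemma succ_x: "i < m \<Longrightarrow> succ (x i) = x (Suc i mod m)"
  unfolding succ_def by (simp add: pos_x)

lemma succ_in_Cyc: "b \<in> Cyc \<Longrightarrow> succ b \<in> Cyc"
  unfolding succ_def using m_pos by (simp add: x_in_Cyc)

lemma inj_on_succ: "inj_on succ Cyc"
proof (rule inj_onI)
  fix a b assume a: "a \<in> Cyc" and b: "b \<in> Cyc" and "succ a = succ b"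
  then have "Suc (pos a) mod m = Suc (pos b) mod m"
    unfolding succ_def using inj_x m_pos by (simp add: inj_on_eq_iff)
  then have "pos a = pos b" using pos_less[OF a] pos_less[OF b]
    by (metis Suc_lessI mod_Suc mod_less Suc_inject nat.distinct(1))
  then show "a = b" using x_pos a b by metis
qed

lemma succ_image: "succ ` Cyc = Cyc"
  using inj_on_succ succ_in_Cyc finite_Cyc by (meson card_image card_subset_eq image_subsetI)

lemma sum_Cyc_succ: "(\<Sum>b\<in>Cyc. f (succ b)) = (\<Sum>b\<in>Cyc. f b)"
  using sum.reindex[OF inj_on_succ, of f] succ_image by simp

lemma funpow_succ_x: "i < m \<Longrightarrow> (succ ^^ k) (x i) = x ((i + k) mod m)"
proof (induction k)
  case (Suc k)
  then show ?case using m_pos by (simp add: succ_x mod_Suc_eq)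
qed simp

lemma funpow_succ_in_Cyc: "u \<in> Cyc \<Longrightarrow> (succ ^^ k) u \<in> Cyc"
  by (induction k) (simp_all add: succ_in_Cyc)

lemma funpow_succ_period: "u \<in> Cyc \<Longrightarrow> (succ ^^ m) u = u"
  using funpow_succ_x[of "pos u" m] pos_less x_pos by simp

lemma funpow_succ_reaches:
  assumes b: "b \<in> Cyc" and u: "u \<in> Cyc"
  obtains d where "d < m" "(succ ^^ d) u = b"
proof
  define d where "d = (pos b + m - pos u) mod m"
  show "d < m" unfolding d_def using m_pos by simp
  have "(pos u + d) mod m = (pos b + m) mod m"
    unfolding d_def using pos_less[OF u] by (simp add: mod_add_right_eq)
  then show "(succ ^^ d) u = b"
    using funpow_succ_x[OF pos_less[OF u], of d] x_pos[OF u] x_pos[OF b] pos_less[OF b] by simp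
qed

definition cyc_edge :: "'v \<Rightarrow> 'e" where
  "cyc_edge b = (SOME e. e \<in> E \<and> head e = b \<and> succ b \<in> edge_path e \<and>
     wtA e = exchange_gain b (succ b))"

lemma cyc_edge:
  assumes b: "b \<in> Cyc"
  shows "cyc_edge b \<in> E" "head (cyc_edge b) = b" "succ b \<in> edge_path (cyc_edge b)"
    "wtA (cyc_edge b) = exchange_gain b (succ b)"
proof -
  have "exchange_arc b (succ b)"
    using arcs pos_less[OF b] x_pos[OF b] unfolding succ_def by metis
  then obtain e where "e \<in> E \<and> head e = b \<and> succ b \<in> edge_path e \<and> wtA e = exchange_gain b (succ b)"
    by (rule exchange_gain_attained) blast
  then have "cyc_edge b \<in> E \<and> head (cyc_edge b) = b \<and> succ b \<in> edge_path (cyc_edge b) \<and>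
      wtA (cyc_edge b) = exchange_gain b (succ b)"
    unfolding cyc_edge_def by (rule someI)
  then show "cyc_edge b \<in> E" "head (cyc_edge b) = b" "succ b \<in> edge_path (cyc_edge b)"
    "wtA (cyc_edge b) = exchange_gain b (succ b)" by auto
qed

definition gain :: int where "gain = (\<Sum>b\<in>Cyc. wtA (cyc_edge b))"

lemma gain_positive: "0 < gain"
proof -
  have "gain = (\<Sum>i<m. wtA (cyc_edge (x i)))"
    unfolding gain_def Cyc_def using inj_x by (simp add: sum.reindex)
  also have "\<dots> = (\<Sum>i<m. exchange_gain (x i) (x (Suc i mod m)))"
    by (rule sum.cong) (auto simp: cyc_edge(4)[OF x_in_Cyc] succ_x)
  finally show ?thesis using gain_pos by simp
qed

text \<open>Subtracting the mean gain gives the cycle reduced weight 0 and makes every shorter closed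
  walk negative.\<close>

definition chord :: "'v \<Rightarrow> 'v \<Rightarrow> bool" where "chord b u \<longleftrightarrow> u \<in> edge_path (cyc_edge b)"

definition reduced :: "'v \<Rightarrow> real" where "reduced b = wtA (cyc_edge b) - gain / m"

lemma chord_succ: "b \<in> Cyc \<Longrightarrow> chord b (succ b)"
  unfolding chord_def using cyc_edge(3) .

lemma sum_reduced: "(\<Sum>b\<in>Cyc. reduced b) = 0"
  unfolding reduced_def using m_pos card_Cyc by (simp add: sum_subtractf gain_def)

lemma short_closed_chord_walk_negative:
  assumes cw: "closed_walk chord Cyc z" and len: "length z \<le> m"
  shows "walk_weight (\<lambda>a b. reduced a) z < 0"
proof -
  have z: "successively chord z" "set z \<subseteq> Cyc" "2 \<le> length z" using cw unfolding closed_walk_def by auto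
  have arc: "exchange_arc a b \<and> wtA (cyc_edge a) \<le> exchange_gain a b" if "a \<in> set z" "chord a b" for a b
    using that z(2) cyc_edge(1,2)[of a] exchange_gain_ge[of "cyc_edge a" b]
    unfolding chord_def exchange_arc_def by auto
  have "closed_walk exchange_arc V z"
    using cw successively_mono[OF z(1)] arc z(2) Cyc_subset_V unfolding closed_walk_def by blast
  then have "walk_weight exchange_gain z \<le> 0" using shorter_nonpos len by blast
  moreover have "walk_weight (\<lambda>a b. real_of_int (wtA (cyc_edge a))) z \<le>
      walk_weight (\<lambda>a b. real_of_int (exchange_gain a b)) z"
    using arc by (intro walk_weight_mono[OF z(1)]) auto
  moreover have "walk_weight (\<lambda>a b. reduced a) z =
      walk_weight (\<lambda>a b. real_of_int (wtA (cyc_edge a))) z - gain / m * real (length z - 1)"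
    unfolding reduced_def by (rule walk_weight_diff_const)
  moreover have "0 < gain / m * real (length z - 1)" using gain_positive m_pos z(3) by simp
  ultimately show ?thesis unfolding walk_weight_of_int by linarith
qed

lemma closed_chord_walk_nonpos: "closed_walk chord Cyc z \<Longrightarrow> walk_weight (\<lambda>a b. reduced a) z \<le> 0"
proof (rule closed_walk_weight_le_0)
  fix z assume cw: "closed_walk chord Cyc z" and d: "distinct (butlast z)"
  show "walk_weight (\<lambda>a b. reduced a) z \<le> 0"
  proof (cases "length z \<le> m")
    case True then show ?thesis using short_closed_chord_walk_negative[OF cw] by simp
  next
    case False
    have sub: "set (butlast z) \<subseteq> Cyc"
      using cw unfolding closed_walk_def by (meson in_set_butlastD subset_iff)
    moreover have "card Cyc \<le> card (set (butlast z))" using distinct_card[OF d] False card_Cyc by simp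
    ultimately have "set (butlast z) = Cyc" using finite_Cyc by (simp add: card_seteq)
    then show ?thesis using d sum_reduced by (simp add: walk_weight_vertex sum_list_distinct_conv_sum_set)
  qed
qed

definition pot :: "'v \<Rightarrow> real" where
  "pot = (SOME p. \<forall>b\<in>Cyc. \<forall>u\<in>Cyc. chord b u \<longrightarrow> p b + reduced b \<le> p u)"

lemma pot: "b \<in> Cyc \<Longrightarrow> u \<in> Cyc \<Longrightarrow> chord b u \<Longrightarrow> pot b + reduced b \<le> pot u"
proof -
  have "\<exists>p. \<forall>b\<in>Cyc. \<forall>u\<in>Cyc. chord b u \<longrightarrow> p b + reduced b \<le> p u"
    using potential_if_closed_walks_nonpos[OF finite_Cyc closed_chord_walk_nonpos] by blast
  then have "\<forall>b\<in>Cyc. \<forall>u\<in>Cyc. chord b u \<longrightarrow> pot b + reduced b \<le> pot u"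
    unfolding pot_def by (rule someI_ex)
  then show "b \<in> Cyc \<Longrightarrow> u \<in> Cyc \<Longrightarrow> chord b u \<Longrightarrow> pot b + reduced b \<le> pot u" by blast
qed

lemma pot_succ: assumes b: "b \<in> Cyc" shows "pot (succ b) = pot b + reduced b"
proof -
  have ge: "0 \<le> pot (succ b) - (pot b + reduced b)" if "b \<in> Cyc" for b
    using pot[OF that succ_in_Cyc[OF that] chord_succ[OF that]] by simp
  have "(\<Sum>b\<in>Cyc. pot (succ b) - (pot b + reduced b)) =
      (\<Sum>b\<in>Cyc. pot (succ b)) - (\<Sum>b\<in>Cyc. pot b) - (\<Sum>b\<in>Cyc. reduced b)"
    by (simp add: sum_subtractf sum.distrib)
  also have "\<dots> = 0" unfolding sum_Cyc_succ sum_reduced by simp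
  finally have "(\<Sum>b\<in>Cyc. pot (succ b) - (pot b + reduced b)) = 0" .
  then have "\<forall>b\<in>Cyc. pot (succ b) - (pot b + reduced b) = 0"
    using sum_nonneg_eq_0_iff[OF finite_Cyc ge] by simp
  then show ?thesis using b by simp
qed

text \<open>Only the cycle itself is tight: following a chord other than the cycle arc and returning
  along the cycle gives a closed walk shorter than the cycle, which has negative reduced weight.\<close>

lemma chord_pot_less:
  assumes b: "b \<in> Cyc" and u: "u \<in> Cyc" and bu: "chord b u" and ne: "u \<noteq> succ b"
  shows "pot b + reduced b < pot u"
proof -
  define f where "f k = (succ ^^ k) u" for k
  have f_Cyc: "f k \<in> Cyc" for k unfolding f_def using funpow_succ_in_Cyc[OF u] .
  obtain d where "d < m" and fd: "f d = b" using funpow_succ_reaches[OF b u] unfolding f_def by blast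
  moreover have "d \<noteq> m - 1"
  proof
    assume "d = m - 1"
    then have "f (Suc d) = u" using funpow_succ_period[OF u] m_pos unfolding f_def by simp
    moreover have "f (Suc d) = succ b" using fd unfolding f_def by simp
    ultimately show False using ne by simp
  qed
  ultimately have d_le: "d + 2 \<le> m" by linarith
  define zs where "zs = b # map f [0..<Suc d]"
  have "successively chord (map f [0..<Suc d])"
    unfolding successively_conv_nth using chord_succ[OF f_Cyc] by (simp add: f_def del: upt_Suc)
  moreover have "hd (map f [0..<Suc d]) = u" by (simp add: upt_conv_Cons f_def del: upt_Suc)
  moreover have "last (map f [0..<Suc d]) = b" using fd by (simp add: last_map del: upt_Suc)
  ultimately have "closed_walk chord Cyc zs"
    unfolding closed_walk_def zs_def using bu f_Cyc b by (auto simp: successively_Cons simp del: upt_Suc)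
  then have "walk_weight (\<lambda>a b. reduced a) zs < 0"
    using short_closed_chord_walk_negative d_le unfolding zs_def by simp
  moreover have "butlast zs = b # map f [0..<d]" unfolding zs_def by simp
  then have "walk_weight (\<lambda>a b. reduced a) zs = reduced b + (\<Sum>k<d. reduced (f k))"
    unfolding walk_weight_vertex by (simp add: interv_sum_list_conv_sum_set_nat atLeast0LessThan)
  moreover have "(\<Sum>k<d. reduced (f k)) = (\<Sum>k<d. pot (f (Suc k)) - pot (f k))"
    using pot_succ[OF f_Cyc] by (simp add: f_def)
  then have "(\<Sum>k<d. reduced (f k)) = pot b - pot u"
    using sum_lessThan_telescope[of "\<lambda>k. pot (f k)" d] fd by (simp add: f_def)
  ultimately show ?thesis by simp
qed

lemma pot_succ_less:
  assumes b: "b \<in> Cyc" and b': "b' \<in> Cyc" "b' \<noteq> b" and bb': "chord b (succ b')"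
  shows "pot (succ b) < pot (succ b')"
proof -
  have "succ b' \<noteq> succ b" using inj_on_succ b b' by (auto dest: inj_onD)
  then show ?thesis using chord_pot_less[OF b succ_in_Cyc[OF b'(1)] bb'] pot_succ[OF b] by simp
qed

lemma cyc_edge_notin_A: assumes b: "b \<in> Cyc" shows "cyc_edge b \<notin> A"
proof
  assume "cyc_edge b \<in> A"
  then have tree: "cyc_edge b = tree_edge b" using tree_edge_head cyc_edge(2)[OF b] by metis
  then have "succ b = b" using cyc_edge(3)[OF b] edge_path_tree_edge b Cyc_subset_V by auto
  then have "(succ ^^ d) b = b" for d by (induction d) simp_all
  then have "u = b" if "u \<in> Cyc" for u using funpow_succ_reaches[OF that b] by metis
  then have "Cyc = {b}" using b by blast
  then have "gain = 0" unfolding gain_def using tree wt_tree_edge b Cyc_subset_V by auto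
  then show False using gain_positive by simp
qed

definition exchanged :: "'v set \<Rightarrow> 'e set" where
  "exchanged X = (A - tree_edge ` succ ` X) \<union> cyc_edge ` X"

lemma cyc_edge_notin_exchanged:
  assumes X: "X \<subseteq> Cyc" and b: "b \<in> Cyc" "b \<notin> X"
  shows "cyc_edge b \<notin> exchanged X"
proof -
  have "cyc_edge b \<noteq> cyc_edge b'" if "b' \<in> X" for b'
    using that b cyc_edge(2) X by (metis subsetD)
  then show ?thesis using cyc_edge_notin_A[OF b(1)] unfolding exchanged_def by blast
qed

lemma tree_edge_succ_in_exchanged:
  assumes X: "X \<subseteq> Cyc" and b: "b \<in> Cyc" "b \<notin> X"
  shows "tree_edge (succ b) \<in> exchanged X"
proof -
  have sV: "succ b \<in> V" using succ_in_Cyc[OF b(1)] Cyc_subset_V by blast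
  have "tree_edge (succ b) \<noteq> tree_edge (succ b')" if "b' \<in> X" for b'
  proof
    assume eq: "tree_edge (succ b) = tree_edge (succ b')"
    have "succ b' \<in> V" using that X succ_in_Cyc Cyc_subset_V by blast
    then have "succ b = succ b'" using inj_onD[OF inj_on_tree_edge eq sV] by simp
    then have "b = b'" using inj_onD[OF inj_on_succ _ b(1)] that X by blast
    then show False using that b(2) by blast
  qed
  then show ?thesis using tree_edge_in_A[OF sV] unfolding exchanged_def by blast
qed

lemma exchanged_insert:
  assumes "X \<subseteq> Cyc" "b \<in> Cyc" "b \<notin> X"
  shows "exchanged (insert b X) = insert (cyc_edge b) (exchanged X - {tree_edge (succ b)})"
proof -
  have "succ b \<in> V" using succ_in_Cyc[OF assms(2)] Cyc_subset_V by blast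
  then have "tree_edge (succ b) \<in> A" by (rule tree_edge_in_A)
  then have "tree_edge (succ b) \<notin> cyc_edge ` X" using assms(1) cyc_edge_notin_A by auto
  then show ?thesis unfolding exchanged_def by auto
qed

lemma tree_edges_kept:
  assumes X: "X \<subseteq> Cyc" and b: "b \<in> X" and max: "\<forall>b'\<in>X. pot (succ b') \<le> pot (succ b)"
  shows "tree_edge ` (edge_path (cyc_edge b) - {succ b}) \<subseteq> exchanged (X - {b})"
proof
  have bC: "b \<in> Cyc" using X b by blast
  fix a assume "a \<in> tree_edge ` (edge_path (cyc_edge b) - {succ b})"
  then obtain u where u: "u \<in> edge_path (cyc_edge b)" "u \<noteq> succ b" "a = tree_edge u" by blast
  have uV: "u \<in> V" using u(1) edge_path_subset_V cyc_edge(1)[OF bC] by blast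
  have "a \<notin> tree_edge ` succ ` (X - {b})"
  proof
    assume "a \<in> tree_edge ` succ ` (X - {b})"
    then obtain b' where b': "b' \<in> X" "b' \<noteq> b" "tree_edge u = tree_edge (succ b')"
      unfolding u(3) by auto
    have "succ b' \<in> V" using succ_in_Cyc X b'(1) Cyc_subset_V by blast
    then have "u = succ b'" using inj_on_tree_edge uV b'(3) by (auto simp: inj_on_eq_iff)
    then have "pot (succ b) < pot (succ b')"
      using pot_succ_less[OF bC _ b'(2)] X b'(1) u(1) unfolding chord_def by blast
    then show False using max b'(1) by force
  qed
  then show "a \<in> exchanged (X - {b})" unfolding exchanged_def using u(3) tree_edge_in_A[OF uV] by blast
qed

lemma uacyclic_exchanged: "X \<subseteq> Cyc \<Longrightarrow> uacyclic tail head (exchanged X)"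
proof (induction "card X" arbitrary: X rule: less_induct)
  case less
  show ?case
  proof (cases "X = {}")
    case True then show ?thesis using uacyclic_A by (simp add: exchanged_def)
  next
    case False
    have finX: "finite X" using less.prems finite_Cyc finite_subset by blast
    obtain b where b: "b \<in> X" "\<forall>b'\<in>X. pot (succ b') \<le> pot (succ b)"
      using Max_in[of "pot ` succ ` X"] Max_ge[of "pot ` succ ` X"] finX False by fastforce
    have bC: "b \<in> Cyc" using less.prems b(1) by blast
    have XbC: "X - {b} \<subseteq> Cyc" using less.prems by blast
    then have IH: "uacyclic tail head (exchanged (X - {b}))"
      by (rule less.hyps[OF card_Diff1_less[OF finX b(1)]])
    have b_notin: "b \<notin> X - {b}" by blast
    have "uacyclic tail head (insert (cyc_edge b) (exchanged (X - {b}) - {tree_edge (succ b)}))"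
      using uacyclic_tree_exchange[OF IH cyc_edge(1)[OF bC] cyc_edge_notin_exchanged[OF XbC bC b_notin]
          cyc_edge(3)[OF bC] tree_edge_succ_in_exchanged[OF XbC bC b_notin] tree_edges_kept[OF less.prems b]] .
    moreover have "exchanged X = insert (cyc_edge b) (exchanged (X - {b}) - {tree_edge (succ b)})"
      using exchanged_insert[OF XbC bC b_notin] b(1) by (simp add: insert_absorb)
    ultimately show ?thesis by simp
  qed
qed

lemma exchanged_Cyc_edge_iff:
  assumes v: "v \<in> V"
  shows "e \<in> exchanged Cyc \<and> head e = v \<longleftrightarrow> e = (if v \<in> Cyc then cyc_edge v else tree_edge v)"
proof -
  have ex: "exchanged Cyc = (A - tree_edge ` Cyc) \<union> cyc_edge ` Cyc"
    unfolding exchanged_def succ_image ..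
  have "tree_edge v \<notin> tree_edge ` Cyc" if "v \<notin> Cyc"
    using that v inj_on_tree_edge Cyc_subset_V by (auto simp: inj_on_eq_iff)
  moreover have "e \<in> A \<Longrightarrow> head e = v \<Longrightarrow> e = tree_edge v" using tree_edge_head by metis
  moreover have "b \<in> Cyc \<Longrightarrow> head (cyc_edge b) = v \<Longrightarrow> b = v" for b using cyc_edge(2) by metis
  moreover have "v \<in> Cyc \<Longrightarrow> tree_edge v \<in> tree_edge ` Cyc" by blast
  ultimately show ?thesis
    unfolding ex using v tree_edge_in_A cyc_edge(2) by auto
qed

lemma arborescence_exchanged: "arborescence V E tail head (exchanged Cyc)"
  unfolding arborescence_def
proof (intro conjI ballI)
  show "exchanged Cyc \<subseteq> E" unfolding exchanged_def using A_subset_E cyc_edge(1) by auto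
  show "uacyclic tail head (exchanged Cyc)" by (rule uacyclic_exchanged) simp
  show "\<exists>!e. e \<in> exchanged Cyc \<and> head e = v" if "v \<in> V" for v
    using exchanged_Cyc_edge_iff[OF that] by auto
qed

lemma wt_sum_exchanged: "wt_sum (exchanged Cyc) = gain"
proof -
  have "aedge head (exchanged Cyc) v = (if v \<in> Cyc then cyc_edge v else tree_edge v)" if "v \<in> V" for v
    using aedge_in[OF arborescence_exchanged that] exchanged_Cyc_edge_iff[OF that] by blast
  then have "wt_sum (exchanged Cyc) = (\<Sum>v\<in>V. if v \<in> Cyc then wtA (cyc_edge v) else 0)"
    unfolding wt_sum_def using wt_tree_edge by (intro sum.cong) auto
  also have "\<dots> = (\<Sum>v\<in>{v\<in>V. v \<in> Cyc}. wtA (cyc_edge v))"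
    using finite_V by (simp add: sum.inter_filter)
  also have "{v\<in>V. v \<in> Cyc} = Cyc" using Cyc_subset_V by blast
  finally show ?thesis unfolding gain_def .
qed

lemma positive_arborescence: "\<exists>B. arborescence V E tail head B \<and> 0 < wt_sum B"
  using arborescence_exchanged wt_sum_exchanged gain_positive by auto

end

section \<open>Potentials from popularity\<close>

context arborescence_prefs
begin

lemma exchange_cycle_of_closed_walk:
  assumes xs: "closed_walk exchange_arc V xs" "0 < walk_weight exchange_gain xs" "distinct (butlast xs)"
    and shorter: "\<And>z. closed_walk exchange_arc V z \<Longrightarrow> length z < length xs \<Longrightarrow>
      walk_weight exchange_gain z \<le> 0"
  shows "exchange_cycle V r E tail head A pref (length xs - 1) (nth xs)"
proof -
  define m where "m = length xs - 1"
  have walk: "2 \<le> length xs" "hd xs = last xs" "successively exchange_arc xs" "set xs \<subseteq> V"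
    using xs(1) unfolding closed_walk_def by auto
  have len: "length xs = Suc m" unfolding m_def using walk(1) by simp
  have wrap: "xs ! (Suc i mod m) = xs ! Suc i" if "i < m" for i
  proof (cases "Suc i < m")
    case False
    then have "Suc i = m" using that by simp
    moreover have "xs \<noteq> []" using len by auto
    then have "xs ! 0 = xs ! m" using walk(2) len hd_conv_nth[of xs] last_conv_nth[of xs] by simp
    ultimately show ?thesis by simp
  qed simp
  show ?thesis
    unfolding m_def[symmetric]
  proof (unfold_locales)
    show "0 < m" using walk(1) len by simp
    show "inj_on (nth xs) {..<m}"
      using xs(3) len by (auto simp: inj_on_def nth_eq_iff_index_eq nth_butlast[symmetric])
    show "\<forall>i<m. xs ! i \<in> V" using walk(4) len by auto
    show "\<forall>i<m. exchange_arc (xs ! i) (xs ! (Suc i mod m))"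
      using walk(3) len wrap unfolding successively_conv_nth by simp
    have "(\<Sum>i<m. exchange_gain (xs ! i) (xs ! (Suc i mod m))) = walk_weight exchange_gain xs"
      unfolding walk_weight_conv_sum len using wrap by simp
    then show "0 < (\<Sum>i<m. exchange_gain (xs ! i) (xs ! (Suc i mod m)))" using xs(2) by simp
    show "\<forall>z. closed_walk exchange_arc V z \<and> length z \<le> m \<longrightarrow> walk_weight exchange_gain z \<le> 0"
      using shorter len by auto
  qed
qed

lemma closed_exchange_walk_nonpos:
  assumes nonpos: "\<forall>B. arborescence V E tail head B \<longrightarrow> wt_sum B \<le> 0"
    and z: "closed_walk exchange_arc V z"
  shows "walk_weight exchange_gain z \<le> 0"
proof (rule ccontr)
  assume "\<not> walk_weight exchange_gain z \<le> 0"
  then obtain xs where "closed_walk exchange_arc V xs" "0 < walk_weight exchange_gain xs"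
      "distinct (butlast xs)"
      "\<And>z. closed_walk exchange_arc V z \<Longrightarrow> length z < length xs \<Longrightarrow> walk_weight exchange_gain z \<le> 0"
    using shortest_positive_closed_walk[OF z] by (metis not_le)
  then have "exchange_cycle V r E tail head A pref (length xs - 1) (nth xs)"
    by (rule exchange_cycle_of_closed_walk)
  then show False using exchange_cycle.positive_arborescence nonpos by fastforce
qed

lemma tree_potential_exists:
  assumes "popular V E tail head pref A"
  obtains L :: "'v \<Rightarrow> int" where "\<forall>e\<in>E. \<forall>u\<in>edge_path e. L (head e) + wtA e \<le> L u"
proof -
  obtain L :: "'v \<Rightarrow> int" where L: "\<forall>v\<in>V. \<forall>u\<in>V. exchange_arc v u \<longrightarrow> L v + exchange_gain v u \<le> L u"
    using potential_if_closed_walks_nonpos[OF finite_V closed_exchange_walk_nonpos] assms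
    unfolding popular_iff_wt_sum_nonpos by blast
  have "L (head e) + wtA e \<le> L u" if e: "e \<in> E" and u: "u \<in> edge_path e" for e u
  proof -
    have "exchange_arc (head e) u" unfolding exchange_arc_def using e u by auto
    then have "L (head e) + exchange_gain (head e) u \<le> L u"
      using L ends e u edge_path_subset_V[OF e] by blast
    then show ?thesis using exchange_gain_ge[OF e u] by simp
  qed
  then show ?thesis using that by blast
qed

end

section \<open>The chain certificate\<close>

lemma card_le_shift:
  fixes \<Lambda> :: "int set"
  assumes fin: "finite \<Lambda>" and a: "a \<in> \<Lambda>" and k: "k \<in> {-1, 0, 1}" and le: "b + k \<le> a"
  shows "int (card {x\<in>\<Lambda>. x \<le> b}) + k \<le> int (card {x\<in>\<Lambda>. x \<le> a})"
proof -
  have fa: "finite {x\<in>\<Lambda>. x \<le> a}" using fin by auto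
  consider "k = -1" | "k = 0" | "k = 1" using k by auto
  then show ?thesis
  proof cases
    case 1
    then have "{x\<in>\<Lambda>. x \<le> b} \<subseteq> insert b {x\<in>\<Lambda>. x \<le> a}" using le by auto
    then have "card {x\<in>\<Lambda>. x \<le> b} \<le> card (insert b {x\<in>\<Lambda>. x \<le> a})" using fa by (intro card_mono) auto
    also have "\<dots> \<le> Suc (card {x\<in>\<Lambda>. x \<le> a})" using fa by (simp add: card_insert_if)
    finally show ?thesis using 1 by simp
  next
    case 2
    then have "{x\<in>\<Lambda>. x \<le> b} \<subseteq> {x\<in>\<Lambda>. x \<le> a}" using le by auto
    then show ?thesis using fa 2 by (simp add: card_mono)
  next
    case 3
    then have "{x\<in>\<Lambda>. x \<le> b} \<subseteq> {x\<in>\<Lambda>. x \<le> a} - {a}" using le by auto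
    then have "card {x\<in>\<Lambda>. x \<le> b} \<le> card ({x\<in>\<Lambda>. x \<le> a} - {a})" using fa by (intro card_mono) auto
    also have "\<dots> = card {x\<in>\<Lambda>. x \<le> a} - 1" using fa a by simp
    finally show ?thesis using 3 a fa card_gt_0_iff[of "{x\<in>\<Lambda>. x \<le> a}"] by force
  qed
qed

text \<open>The chain of the certificate consists of the level sets of a potential L; counting the
  members that contain an edge turns the potential inequality into dual feasibility.\<close>

locale level_chain = arborescence_prefs V r E tail head A pref
  for V :: "'v set" and r :: 'v and E :: "'e set" and tail head :: "'e \<Rightarrow> 'v" and A :: "'e set"
    and pref :: "'v \<Rightarrow> 'e \<Rightarrow> 'e \<Rightarrow> bool" +
  fixes L :: "'v \<Rightarrow> int"
  assumes potential: "\<forall>e\<in>E. \<forall>u\<in>edge_path e. L (head e) + wtA e \<le> L u"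
    and V_nonempty: "V \<noteq> {}"
begin

text \<open>The extra level above all potentials is the edge_level of edges with an empty fundamental
  cycle (loops), so that every edge_level is a level.\<close>

definition top_level :: int where "top_level = Max (L ` V) + 1"

definition levels :: "int set" where "levels = insert top_level (L ` V)"

definition level_set :: "int \<Rightarrow> 'e set" where "level_set l = {e\<in>E. \<forall>u\<in>edge_path e. l \<le> L u}"

definition cert_chain :: "'e set set" where
  "cert_chain = {level_set l | l. l \<in> levels \<and> level_set l \<noteq> {}}"

definition edge_level :: "'e \<Rightarrow> int" where "edge_level e = Min (insert top_level (L ` edge_path e))"

definition levels_upto :: "int \<Rightarrow> nat" where "levels_upto k = card {l\<in>levels. l \<le> k}"

lemma finite_levels: "finite levels"
  unfolding levels_def using finite_V by simp

lemma L_less_top_level: "u \<in> V \<Longrightarrow> L u < top_level"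
  unfolding top_level_def using finite_V by (simp add: le_imp_less_Suc)

lemma levels_le_top_level: "l \<in> levels \<Longrightarrow> l \<le> top_level"
  unfolding levels_def using L_less_top_level by fastforce

lemma finite_edge_levels: "e \<in> E \<Longrightarrow> finite (insert top_level (L ` edge_path e))"
  using edge_path_subset_V finite_V finite_subset by blast

lemma tree_edge_in_level_set: "v \<in> V \<Longrightarrow> tree_edge v \<in> level_set l \<longleftrightarrow> l \<le> L v"
  unfolding level_set_def using edge_path_tree_edge tree_edge_in_E by auto

lemma in_level_set_iff: "e \<in> E \<Longrightarrow> l \<le> top_level \<Longrightarrow> e \<in> level_set l \<longleftrightarrow> l \<le> edge_level e"
  unfolding level_set_def edge_level_def using finite_edge_levels by simp

lemma edge_level_in_levels: "e \<in> E \<Longrightarrow> edge_level e \<in> levels"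
  unfolding edge_level_def levels_def using Min_in[OF finite_edge_levels] edge_path_subset_V
  by (metis (no_types, lifting) image_mono insert_mono insert_not_empty subsetD)

lemma edge_level_tree_edge: "v \<in> V \<Longrightarrow> edge_level (tree_edge v) = L v"
  unfolding edge_level_def using edge_path_tree_edge L_less_top_level by simp

lemma inj_on_level_set: "inj_on level_set levels"
proof -
  have "level_set l1 \<noteq> level_set l2" if "l1 \<in> levels" "l2 \<in> levels" "l1 < l2" for l1 l2
  proof -
    have "l1 \<in> L ` V" using that levels_le_top_level[of l2] unfolding levels_def by fastforce
    then obtain u where "u \<in> V" "L u = l1" by auto
    then have "tree_edge u \<in> level_set l1" "tree_edge u \<notin> level_set l2"
      using tree_edge_in_level_set[of u] that(3) by auto
    then show ?thesis by blast
  qed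
  then show ?thesis by (metis inj_onI linorder_neqE)
qed

lemma card_cert_chain_containing:
  assumes e: "e \<in> E" shows "card {C\<in>cert_chain. e \<in> C} = levels_upto (edge_level e)"
proof -
  have "{C\<in>cert_chain. e \<in> C} = level_set ` {l\<in>levels. l \<le> edge_level e}"
    unfolding cert_chain_def using in_level_set_iff[OF e] levels_le_top_level by auto
  moreover have "inj_on level_set {l\<in>levels. l \<le> edge_level e}"
    using inj_on_level_set by (rule inj_on_subset) auto
  ultimately show ?thesis unfolding levels_upto_def by (simp add: card_image)
qed

lemma levels_upto_feasible:
  assumes e: "e \<in> E" shows "int (levels_upto (L (head e))) + wtA e \<le> int (levels_upto (edge_level e))"
proof -
  have "L (head e) + wtA e \<le> top_level"
    using L_less_top_level[of "head e"] ends e wt_cases[of head pref A e] by auto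
  then have "L (head e) + wtA e \<le> edge_level e"
    using potential e finite_edge_levels[OF e] unfolding edge_level_def by simp
  then show ?thesis
    unfolding levels_upto_def by (rule card_le_shift[OF finite_levels edge_level_in_levels[OF e] wt_cases])
qed

lemma cert_chain_subset_Pow: "cert_chain \<subseteq> Pow E"
  unfolding cert_chain_def level_set_def by auto

lemma is_chain_cert_chain: "is_chain cert_chain"
proof -
  have mono: "level_set l2 \<subseteq> level_set l1" if "l1 \<le> l2" for l1 l2
    unfolding level_set_def using that by auto
  have "level_set l1 \<subset> level_set l2 \<or> level_set l2 \<subset> level_set l1"
    if "level_set l1 \<noteq> level_set l2" for l1 l2
    using that mono[of l1 l2] mono[of l2 l1] by (cases "l1 \<le> l2") auto
  then show ?thesis unfolding is_chain_def cert_chain_def by blast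
qed

lemma E_in_cert_chain: "E \<in> cert_chain"
proof -
  define l where "l = Min (L ` V)"
  have "l \<in> levels" unfolding l_def levels_def using finite_V V_nonempty by simp
  moreover have "level_set l = E"
    unfolding level_set_def l_def using edge_path_subset_V finite_V by (auto intro!: Min_le)
  moreover have "E \<noteq> {}" using V_nonempty tree_edge_in_E by blast
  ultimately show ?thesis unfolding cert_chain_def by auto
qed

text \<open>The fundamental cycle of an edge of a level set consists of tree edges of the level set.\<close>

lemma level_set_spanned:
  shows "gspan tail head E (A \<inter> level_set l) = level_set l"
    and "grank tail head (level_set l) = card (A \<inter> level_set l)"
proof -
  define U where "U = {u\<in>V. l \<le> L u}"
  have AC: "A \<inter> level_set l = tree_edge ` U"
    unfolding A_eq_tree_edges U_def using tree_edge_in_level_set by auto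
  have U: "U \<subseteq> V" unfolding U_def by auto
  have fin: "finite (A \<inter> level_set l)" using finite_E A_subset_E by (meson finite_Int finite_subset)
  have acyc: "uacyclic tail head (A \<inter> level_set l)" using uacyclic_A by (rule uacyclic_subset) auto
  have uconn_iff: "uconn tail head (A \<inter> level_set l) (tail e) (head e) \<longleftrightarrow> e \<in> level_set l"
    if e: "e \<in> E" for e
  proof -
    have "e \<in> level_set l \<longleftrightarrow> edge_path e \<subseteq> U"
      unfolding level_set_def U_def using e edge_path_subset_V by auto
    moreover have "edge_path e \<subseteq> U \<Longrightarrow> uconn tail head (tree_edge ` U) (tail e) (head e)"
      using uconn_tree_path[OF _ _ _ U] ends e unfolding edge_path_def by blast
    ultimately show ?thesis
      unfolding AC using tree_path_subset_if_uconn[OF _ U] unfolding edge_path_def by blast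
  qed
  show "gspan tail head E (A \<inter> level_set l) = level_set l"
    unfolding gspan_uacyclic[OF fin acyc] using uconn_iff level_set_def by auto
  show "grank tail head (level_set l) = card (A \<inter> level_set l)"
    using finite_E uconn_iff acyc unfolding level_set_def
    by (intro grank_eq_card_spanning_forest) auto
qed

definition cert_y :: "'e set \<Rightarrow> real" where "cert_y S = (if S \<in> cert_chain then 1 else 0)"

definition cert_alpha :: "'v \<Rightarrow> real" where
  "cert_alpha v = - real (card {C \<in> cert_chain. tree_edge v \<in> C})"

lemma support_cert_y: "{S. S \<subseteq> E \<and> cert_y S > 0} = cert_chain"
  using cert_chain_subset_Pow unfolding cert_y_def by auto

lemma sum_cert_y: "(\<Sum>S \<in> {S. S \<subseteq> E \<and> e \<in> S}. cert_y S) = real (card {C\<in>cert_chain. e \<in> C})"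
proof -
  have "finite {S. S \<subseteq> E \<and> e \<in> S}" using finite_E by simp
  moreover have "{S. S \<subseteq> E \<and> e \<in> S} \<inter> {S. S \<in> cert_chain} = {C\<in>cert_chain. e \<in> C}"
    using cert_chain_subset_Pow by auto
  ultimately show ?thesis unfolding cert_y_def by (simp add: of_bool_def[symmetric])
qed

lemma dual_feasible_cert: "dual_feasible cert_y cert_alpha"
  unfolding dual_feasible_def
proof (intro conjI ballI allI impI)
  fix v e assume v: "v \<in> V" and e: "e \<in> E" "head e = v"
  have "cert_alpha v = - real (levels_upto (L v))"
    unfolding cert_alpha_def using card_cert_chain_containing edge_level_tree_edge v tree_edge_in_E by simp
  then show "real_of_int (wtA e) \<le> (\<Sum>S \<in> {S. S \<subseteq> E \<and> e \<in> S}. cert_y S) + cert_alpha v"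
    using levels_upto_feasible[OF e(1)] e card_cert_chain_containing[OF e(1)] sum_cert_y by simp
qed (simp add: cert_y_def)

lemma dual_value_cert: "dual_value cert_y cert_alpha = 0"
proof -
  have "(\<Sum>S \<in> Pow E. real (grank tail head S) * cert_y S) =
      (\<Sum>S \<in> Pow E. cert_y S * real (card {v\<in>V. tree_edge v \<in> S}))"
    using cert_chain_def level_set_spanned(2) card_A_Int unfolding cert_y_def by (intro sum.cong) auto
  also have "\<dots> = (\<Sum>v\<in>V. \<Sum>S \<in> {S. S \<subseteq> E \<and> tree_edge v \<in> S}. cert_y S)"
    by (rule sum_sets_containing[OF finite_V finite_E, symmetric])
  also have "\<dots> = - (\<Sum>v\<in>V. cert_alpha v)"
    unfolding cert_alpha_def sum_cert_y by (simp add: sum_negf)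
  finally show ?thesis unfolding dual_value_def by simp
qed

lemma chain_certificate_cert: "chain_certificate cert_y cert_alpha"
  unfolding chain_certificate_def Let_def support_cert_y
  using is_chain_cert_chain level_set_spanned(1) E_in_cert_chain
  by (auto simp: cert_y_def cert_alpha_def cert_chain_def)

end

context arborescence_prefs
begin

theorem popular_iff_chain_certificate:
  assumes "V \<noteq> {}"
  shows "popular V E tail head pref A \<longleftrightarrow>
    (\<exists>y \<alpha>. dual_feasible y \<alpha> \<and> dual_value y \<alpha> = 0 \<and> chain_certificate y \<alpha>)"
proof
  assume "popular V E tail head pref A"
  then obtain L where "\<forall>e\<in>E. \<forall>u\<in>edge_path e. L (head e) + wtA e \<le> L u"
    by (rule tree_potential_exists)
  then interpret level_chain V r E tail head A pref L
    using assms by unfold_locales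
  show "\<exists>y \<alpha>. dual_feasible y \<alpha> \<and> dual_value y \<alpha> = 0 \<and> chain_certificate y \<alpha>"
    using dual_feasible_cert dual_value_cert chain_certificate_cert by blast
qed (use popular_if_dual_value_0 in blast)

end

theorem lemma2p1:
  fixes V :: "'v set" and r :: 'v and E :: "'e set"
    and tail head :: "'e \<Rightarrow> 'v"
    and pref :: "'v \<Rightarrow> 'e \<Rightarrow> 'e \<Rightarrow> bool"
    and A :: "'e set"
  assumes finV: "finite V" and finE: "finite E"
    and Vne: "V \<noteq> {}"
    and rV: "r \<notin> V"
    and ends: "\<forall>e \<in> E. tail e \<in> V \<union> {r} \<and> head e \<in> V"
    and irr: "\<forall>v \<in> V. \<forall>e \<in> E. head e = v \<longrightarrow> \<not> pref v e e"
    and trans: "\<forall>v \<in> V. \<forall>e \<in> E. \<forall>f \<in> E. \<forall>g \<in> E.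
                  head e = v \<and> head f = v \<and> head g = v \<and> pref v e f \<and> pref v f g \<longrightarrow> pref v e g"
    and arb: "arborescence V E tail head A"
  shows "popular V E tail head pref A \<longleftrightarrow>
    (\<exists>(y :: 'e set \<Rightarrow> real) (\<alpha> :: 'v \<Rightarrow> real).
       (\<forall>S \<subseteq> E. y S \<ge> 0) \<and>
       (\<forall>v \<in> V. \<forall>e \<in> E. head e = v \<longrightarrow>
          (\<Sum>S \<in> {S. S \<subseteq> E \<and> e \<in> S}. y S) + \<alpha> v \<ge> real_of_int (wt head pref A e)) \<and>
       (\<Sum>S \<in> Pow E. real (grank tail head S) * y S) + (\<Sum>v \<in> V. \<alpha> v) = 0 \<and>
       (let \<C> = {S. S \<subseteq> E \<and> y S > 0} in
          (\<forall>S \<subseteq> E. y S \<in> \<int>) \<and> is_chain \<C> \<and>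
          (\<forall>C \<in> \<C>. gspan tail head E (A \<inter> C) = C) \<and>
          (\<forall>C \<in> \<C>. C \<noteq> {}) \<and> E \<in> \<C> \<and>
          (\<forall>C \<in> \<C>. y C = 1) \<and>
          (\<forall>v \<in> V. \<alpha> v = - real (card {C \<in> \<C>. aedge head A v \<in> C}))))"
proof -
  interpret arborescence_prefs V r E tail head A pref
    using finV finE rV ends arb irr trans by unfold_locales
  show ?thesis
    using popular_iff_chain_certificate[OF Vne]
    unfolding dual_feasible_def dual_value_def chain_certificate_def conj_assoc .
qed

end
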